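(* Let $f$ satisfy Assumption A, $g$ satisfy Assumption B, $L>L_f$ and $1/L>s_0$. Let $(u_k)$ be a sequence of proximal gradient iterates with parameter $L$ and let $u_{k_n}\rightharpoonup u^*$ weakly in $L^2(\Omega)$ for some subsequence. Assume $\nabla f(u_{k_n})(x)\to\nabla f(u^* )(x)$ for almost every $x\in\Omega$. Then for almost all $x\in\Omega$, \[ u^*(x)\in\big(\mathcal{G}^0\cup\operatorname{conv}^\infty\mathcal{G}^+\cup\operatorname{conv}^\infty\mathcal{G}^-\big)\big(-\nabla f(u^* )(x)\big). \]
   Context: $\Omega\subset\mathbb{R}^n$ Lebesgue measurable with finite measure. Assumption A: $f:L^2(\Omega)\to\mathbb{R}$ bounded below, weakly lower semicontinuous, Fréchet differentiable, $\nabla f$ Lipschitz with constant $L_f$. Assumption B on $g:\mathbb{R}\to\mathbb{R}\cup\{+\infty\}$: (B1) lsc, symmetric, $g(0)=0$; (B2) $g(u)<\infty$ for some $u\ne0$; (B3) one of (B3a) $g$ twice differentiable on some $(0,\epsilon)$, $\limsup_{u\searrow0}g''(u)\in(-\infty,0)$; (B3b) same differentiability, $\lim_{u\searrow0}g''(u)=-\infty$; (B3c) $\liminf_{u\searrow0}g(u)>0$; (B4) $g\ge0$. $s_0:=0$ if (B3b) or (B3c) holds, otherwise $s_0:=-1/\limsup_{u\searrow0}g''(u)$. Proximal gradient iterates with parameter $L>0$: $(u_k)_{k\ge0}\subset L^2(\Omega)$, arbitrary $u_0$, each $u_{k+1}$ a global minimizer over $L^2(\Omega)$ of $f(u_k)+\int_\Omega\nabla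 f(u_k)(u-u_k)\,dx+\frac L2\|u-u_k\|^2_{L^2(\Omega)}+\int_\Omega g(u(x))\,dx$. $\mathcal{G}_L:\mathbb{R}\rightrightarrows\mathbb{R}$: $u\in\mathcal{G}_L(z)$ iff $u$ is a global minimizer of $v\mapsto -zv+\frac L2(v-u)^2+g(v)$; $\mathcal{G}^+(z):=\mathcal{G}_L(z)\cap(0,\infty)$, $\mathcal{G}^-(z):=\mathcal{G}_L(z)\cap(-\infty,0)$, $\mathcal{G}^0(z):=\mathcal{G}_L(z)\cap\{0\}$; unions of set-valued maps are taken pointwise. For $F:\mathbb{R}\rightrightarrows\mathbb{R}$, $(\operatorname{conv}^\infty F)(x):=\limsup_{k\to\infty}\operatorname{conv}\big(\bigcup_{|x'-x|<1/k}F(x')\big)$, where $\operatorname{conv}$ is the convex hull and the outer limit $\limsup_k A_k$ is the set of all limits of sequences $y_{k_j}\in A_{k_j}$ along subsequences. *)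

theory Defs
  imports "HOL-Analysis.Analysis"
begin

definition L2 :: "'a::euclidean_space set \<Rightarrow> ('a \<Rightarrow> real) set" where
  "L2 \<Omega> = {u. u \<in> borel_measurable (lebesgue_on \<Omega>) \<and>
                 integrable (lebesgue_on \<Omega>) (\<lambda>x. (u x)\<^sup>2)}"

definition L2_inner :: "'a::euclidean_space set \<Rightarrow> ('a \<Rightarrow> real) \<Rightarrow> ('a \<Rightarrow> real) \<Rightarrow> real" where
  "L2_inner \<Omega> u v = (\<integral>x. u x * v x \<partial>lebesgue_on \<Omega>)"

definition L2_norm :: "'a::euclidean_space set \<Rightarrow> ('a \<Rightarrow> real) \<Rightarrow> real" where
  "L2_norm \<Omega> u = sqrt (L2_inner \<Omega> u u)"

definition weak_conv_L2 :: "'a::euclidean_space set \<Rightarrow> (nat \<Rightarrow> 'a \<Rightarrow> real) \<Rightarrow> ('a \<Rightarrow> real) \<Rightarrow> bool" where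
  "weak_conv_L2 \<Omega> v w \<longleftrightarrow> (\<forall>k. v k \<in> L2 \<Omega>) \<and> w \<in> L2 \<Omega> \<and>
     (\<forall>h \<in> L2 \<Omega>. (\<lambda>k. L2_inner \<Omega> (v k) h) \<longlonglongrightarrow> L2_inner \<Omega> w h)"

definition assumption_A ::
  "'a::euclidean_space set \<Rightarrow> (('a \<Rightarrow> real) \<Rightarrow> real) \<Rightarrow> (('a \<Rightarrow> real) \<Rightarrow> 'a \<Rightarrow> real) \<Rightarrow> real \<Rightarrow> bool" where
  "assumption_A \<Omega> f gradf Lf \<longleftrightarrow>
     \<comment> \<open>f is a function on equivalence classes\<close>
     (\<forall>u \<in> L2 \<Omega>. \<forall>v \<in> L2 \<Omega>. (AE x in lebesgue_on \<Omega>. u x = v x) \<longrightarrow> f u = f v) \<and>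
     \<comment> \<open>bounded below\<close>
     (\<exists>c. \<forall>u \<in> L2 \<Omega>. c \<le> f u) \<and>
     \<comment> \<open>weakly (sequentially) lower semicontinuous\<close>
     (\<forall>v w. weak_conv_L2 \<Omega> v w \<longrightarrow> ereal (f w) \<le> liminf (\<lambda>k. ereal (f (v k)))) \<and>
     \<comment> \<open>Frechet differentiable with gradient gradf (Riesz representative)\<close>
     (\<forall>u \<in> L2 \<Omega>. gradf u \<in> L2 \<Omega> \<and>
        (\<forall>\<epsilon>>0. \<exists>\<delta>>0. \<forall>h \<in> L2 \<Omega>. L2_norm \<Omega> h < \<delta> \<longrightarrow>
            \<bar>f (\<lambda>x. u x + h x) - f u - L2_inner \<Omega> (gradf u) h\<bar> \<le> \<epsilon> * L2_norm \<Omega> h)) \<and>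
     \<comment> \<open>gradient Lipschitz with constant Lf\<close>
     0 \<le> Lf \<and>
     (\<forall>u \<in> L2 \<Omega>. \<forall>v \<in> L2 \<Omega>.
        L2_norm \<Omega> (\<lambda>x. gradf u x - gradf v x) \<le> Lf * L2_norm \<Omega> (\<lambda>x. u x - v x))"

definition lsc_ereal :: "(real \<Rightarrow> ereal) \<Rightarrow> bool" where
  "lsc_ereal g \<longleftrightarrow> (\<forall>x. g x \<le> Liminf (at x) g)"

definition twice_diff_near0 :: "(real \<Rightarrow> ereal) \<Rightarrow> bool" where
  "twice_diff_near0 g \<longleftrightarrow> (\<exists>\<epsilon>>0. \<forall>u \<in> {0<..<\<epsilon>}. g u \<noteq> \<infinity> \<and> g u \<noteq> -\<infinity> \<and>
      (\<lambda>v. real_of_ereal (g v)) differentiable (at u) \<and>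
      deriv (\<lambda>v. real_of_ereal (g v)) differentiable (at u))"

definition g2 :: "(real \<Rightarrow> ereal) \<Rightarrow> real \<Rightarrow> real" where
  "g2 g = deriv (deriv (\<lambda>v. real_of_ereal (g v)))"

definition B3a :: "(real \<Rightarrow> ereal) \<Rightarrow> bool" where
  "B3a g \<longleftrightarrow> twice_diff_near0 g \<and>
     Limsup (at_right 0) (\<lambda>u. ereal (g2 g u)) \<in> {-\<infinity><..<0}"

definition B3b :: "(real \<Rightarrow> ereal) \<Rightarrow> bool" where
  "B3b g \<longleftrightarrow> twice_diff_near0 g \<and>
     ((\<lambda>u. ereal (g2 g u)) \<longlongrightarrow> -\<infinity>) (at_right 0)"

definition B3c :: "(real \<Rightarrow> ereal) \<Rightarrow> bool" where
  "B3c g \<longleftrightarrow> Liminf (at_right 0) g > 0"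

definition assumption_B :: "(real \<Rightarrow> ereal) \<Rightarrow> bool" where
  "assumption_B g \<longleftrightarrow>
     lsc_ereal g \<and> (\<forall>u. g (-u) = g u) \<and> g 0 = 0 \<and>
     (\<exists>u. u \<noteq> 0 \<and> g u < \<infinity>) \<and>
     (B3a g \<or> B3b g \<or> B3c g) \<and>
     (\<forall>u. g u \<ge> 0)"

definition s0 :: "(real \<Rightarrow> ereal) \<Rightarrow> real" where
  "s0 g = (if B3b g \<or> B3c g then 0
           else - 1 / real_of_ereal (Limsup (at_right 0) (\<lambda>u. ereal (g2 g u))))"

text \<open>integral of g(u(x)) over Omega (g is nonnegative)\<close>
definition G_int :: "'a::euclidean_space set \<Rightarrow> (real \<Rightarrow> ereal) \<Rightarrow> ('a \<Rightarrow> real) \<Rightarrow> ereal" where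
  "G_int \<Omega> g u = enn2ereal (\<integral>\<^sup>+ x. e2ennreal (g (u x)) \<partial>lebesgue_on \<Omega>)"

definition prox_model ::
  "'a::euclidean_space set \<Rightarrow> (('a \<Rightarrow> real) \<Rightarrow> real) \<Rightarrow> (('a \<Rightarrow> real) \<Rightarrow> 'a \<Rightarrow> real) \<Rightarrow>
   (real \<Rightarrow> ereal) \<Rightarrow> real \<Rightarrow> ('a \<Rightarrow> real) \<Rightarrow> ('a \<Rightarrow> real) \<Rightarrow> ereal" where
  "prox_model \<Omega> f gradf g L uk u =
     ereal (f uk + L2_inner \<Omega> (gradf uk) (\<lambda>x. u x - uk x)
            + L / 2 * (L2_norm \<Omega> (\<lambda>x. u x - uk x))\<^sup>2) + G_int \<Omega> g u"

definition prox_grad_iterates ::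
  "'a::euclidean_space set \<Rightarrow> (('a \<Rightarrow> real) \<Rightarrow> real) \<Rightarrow> (('a \<Rightarrow> real) \<Rightarrow> 'a \<Rightarrow> real) \<Rightarrow>
   (real \<Rightarrow> ereal) \<Rightarrow> real \<Rightarrow> (nat \<Rightarrow> 'a \<Rightarrow> real) \<Rightarrow> bool" where
  "prox_grad_iterates \<Omega> f gradf g L uu \<longleftrightarrow>
     (\<forall>k. uu k \<in> L2 \<Omega>) \<and>
     (\<forall>k. \<forall>v \<in> L2 \<Omega>. prox_model \<Omega> f gradf g L (uu k) (uu (Suc k))
                      \<le> prox_model \<Omega> f gradf g L (uu k) v)"

definition GL :: "(real \<Rightarrow> ereal) \<Rightarrow> real \<Rightarrow> real \<Rightarrow> real set" where
  "GL g L z = {u. \<forall>v. ereal (- z * u + L / 2 * (u - u)\<^sup>2) + g u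
                      \<le> ereal (- z * v + L / 2 * (v - u)\<^sup>2) + g v}"

definition Gplus :: "(real \<Rightarrow> ereal) \<Rightarrow> real \<Rightarrow> real \<Rightarrow> real set" where
  "Gplus g L z = GL g L z \<inter> {0<..}"

definition Gminus :: "(real \<Rightarrow> ereal) \<Rightarrow> real \<Rightarrow> real \<Rightarrow> real set" where
  "Gminus g L z = GL g L z \<inter> {..<0}"

definition Gzero :: "(real \<Rightarrow> ereal) \<Rightarrow> real \<Rightarrow> real \<Rightarrow> real set" where
  "Gzero g L z = GL g L z \<inter> {0}"

definition outer_limit :: "(nat \<Rightarrow> real set) \<Rightarrow> real set" where
  "outer_limit A = {y. \<exists>r yy. strict_mono r \<and> (\<forall>j. yy j \<in> A (r j)) \<and> yy \<longlonglongrightarrow> y}"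

text \<open>conv^infty F; the index k runs over 1,2,3,... (written Suc k).\<close>
definition conv_inf :: "(real \<Rightarrow> real set) \<Rightarrow> real \<Rightarrow> real set" where
  "conv_inf F x = outer_limit (\<lambda>k. convex hull (\<Union>x' \<in> {x'. \<bar>x' - x\<bar> < 1 / real (Suc k)}. F x'))"

end

theory Submission
  imports Defs
begin

(* The proximal step satisfies a sufficient decrease estimate (descent lemma and L > Lf), so
   sum_k ||u_{k+1} - u_k||^2 is finite and u_{k+1}(x) - u_k(x) -> 0 almost everywhere.
   The step decouples pointwise: for a.e. x, u_{k+1}(x) minimises L/2 v^2 - p_k(x) v + g(v)
   with p_k = L u_k - grad f(u_k), i.e. u_{k+1}(x) lies in G_L(z_k(x)) for
   z_k = p_k - L u_{k+1} -> -grad f(ustar) along the subsequence. The condition 1/L > s0 keeps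
   nonzero minimisers of the scalar problem a fixed distance away from 0, so the sign of
   u_k(x) is eventually constant. Weak convergence puts ustar(x) between the liminf and limsup of
   u_{k_n}(x) for a.e. x, which places it in G^0, or in the convexified outer limit of G^+
   or of G^-, according to that eventual sign. *)

section \<open>Square integrable functions\<close>

lemma L2_mult_integrable:
  assumes "u \<in> L2 \<Omega>" "v \<in> L2 \<Omega>"
  shows "integrable (lebesgue_on \<Omega>) (\<lambda>x. u x * v x)"
proof (rule Bochner_Integration.integrable_bound)
  show "integrable (lebesgue_on \<Omega>) (\<lambda>x. (u x)\<^sup>2 + (v x)\<^sup>2)"
    using assms by (auto simp: L2_def)
  show "(\<lambda>x. u x * v x) \<in> borel_measurable (lebesgue_on \<Omega>)"
    using assms by (auto simp: L2_def)
  have "norm (u x * v x) \<le> norm ((u x)\<^sup>2 + (v x)\<^sup>2)" for x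
  proof -
    have "2 * (\<bar>u x\<bar> * \<bar>v x\<bar>) \<le> (u x)\<^sup>2 + (v x)\<^sup>2"
      using sum_squares_bound[of "\<bar>u x\<bar>" "\<bar>v x\<bar>"] by simp
    moreover have "0 \<le> \<bar>u x\<bar> * \<bar>v x\<bar>"
      by simp
    ultimately have "\<bar>u x\<bar> * \<bar>v x\<bar> \<le> (u x)\<^sup>2 + (v x)\<^sup>2"
      by linarith
    then show ?thesis
      by (simp add: abs_mult)
  qed
  then show "AE x in lebesgue_on \<Omega>. norm (u x * v x) \<le> norm ((u x)\<^sup>2 + (v x)\<^sup>2)"
    by simp
qed

lemma L2_lin_comb:
  assumes "u \<in> L2 \<Omega>" "v \<in> L2 \<Omega>"
  shows "(\<lambda>x. a * u x + b * v x) \<in> L2 \<Omega>"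
proof -
  have meas: "(\<lambda>x. a * u x + b * v x) \<in> borel_measurable (lebesgue_on \<Omega>)"
    using assms by (auto simp: L2_def)
  have "integrable (lebesgue_on \<Omega>) (\<lambda>x. (a * u x + b * v x)\<^sup>2)"
  proof (rule Bochner_Integration.integrable_bound)
    show "integrable (lebesgue_on \<Omega>) (\<lambda>x. 2 * a\<^sup>2 * (u x)\<^sup>2 + 2 * b\<^sup>2 * (v x)\<^sup>2)"
      using assms by (auto simp: L2_def)
    show "(\<lambda>x. (a * u x + b * v x)\<^sup>2) \<in> borel_measurable (lebesgue_on \<Omega>)"
      using meas by measurable
    have "(a * u x + b * v x)\<^sup>2 \<le> 2 * a\<^sup>2 * (u x)\<^sup>2 + 2 * b\<^sup>2 * (v x)\<^sup>2" for x
      using sum_squares_bound[of "a * u x" "b * v x"]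
      by (simp add: power2_sum power_mult_distrib)
    then show "AE x in lebesgue_on \<Omega>. norm ((a * u x + b * v x)\<^sup>2)
        \<le> norm (2 * a\<^sup>2 * (u x)\<^sup>2 + 2 * b\<^sup>2 * (v x)\<^sup>2)"
      by simp
  qed
  with meas show ?thesis by (simp add: L2_def)
qed

lemma L2_diff: "u \<in> L2 \<Omega> \<Longrightarrow> v \<in> L2 \<Omega> \<Longrightarrow> (\<lambda>x. u x - v x) \<in> L2 \<Omega>"
  using L2_lin_comb[of u \<Omega> v 1 "-1"] by simp

lemma L2_indicator:
  assumes "\<Omega> \<in> sets lebesgue" "emeasure lebesgue \<Omega> < \<infinity>" "A \<in> sets (lebesgue_on \<Omega>)"
  shows "(indicator A :: 'a::euclidean_space \<Rightarrow> real) \<in> L2 \<Omega>"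
proof -
  interpret finite_measure "lebesgue_on \<Omega>"
    using assms(1,2) by (intro finite_measure_lebesgue_on fmeasurableI)
  have "integrable (lebesgue_on \<Omega>) (indicator A :: 'a \<Rightarrow> real)"
    using assms(3) by (intro integrable_real_indicator) (auto simp: less_top[symmetric])
  moreover have "(\<lambda>x. (indicator A x :: real)\<^sup>2) = indicator A"
    by (auto simp: indicator_def)
  ultimately show ?thesis
    using assms(3) by (simp add: L2_def)
qed

lemma L2_inner_commute: "L2_inner \<Omega> u v = L2_inner \<Omega> v u"
  by (simp add: L2_inner_def mult.commute)

lemma L2_inner_lin_comb_right:
  assumes "u \<in> L2 \<Omega>" "v \<in> L2 \<Omega>" "w \<in> L2 \<Omega>"
  shows "L2_inner \<Omega> u (\<lambda>x. a * v x + b * w x) = a * L2_inner \<Omega> u v + b * L2_inner \<Omega> u w"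
proof -
  have "L2_inner \<Omega> u (\<lambda>x. a * v x + b * w x)
      = (\<integral>x. a * (u x * v x) + b * (u x * w x) \<partial>lebesgue_on \<Omega>)"
    unfolding L2_inner_def by (rule Bochner_Integration.integral_cong) (auto simp: algebra_simps)
  also have "\<dots> = a * L2_inner \<Omega> u v + b * L2_inner \<Omega> u w"
    using L2_mult_integrable[OF assms(1,2)] L2_mult_integrable[OF assms(1,3)]
    by (simp add: L2_inner_def)
  finally show ?thesis .
qed

lemma L2_inner_scale_right: "L2_inner \<Omega> u (\<lambda>x. a * v x) = a * L2_inner \<Omega> u v"
  by (simp add: L2_inner_def mult.left_commute)

lemma L2_inner_diff_left:
  assumes "u \<in> L2 \<Omega>" "v \<in> L2 \<Omega>" "w \<in> L2 \<Omega>"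
  shows "L2_inner \<Omega> (\<lambda>x. u x - v x) w = L2_inner \<Omega> u w - L2_inner \<Omega> v w"
  using L2_inner_lin_comb_right[OF assms(3,1,2), of 1 "-1"] by (simp add: L2_inner_commute)

lemma L2_inner_self_nonneg: "0 \<le> L2_inner \<Omega> u u"
  unfolding L2_inner_def by (rule integral_nonneg_AE) simp

lemma L2_norm_nonneg: "0 \<le> L2_norm \<Omega> u"
  using L2_inner_self_nonneg[of \<Omega> u] by (simp add: L2_norm_def)

lemma L2_norm_power2: "(L2_norm \<Omega> u)\<^sup>2 = L2_inner \<Omega> u u"
  using L2_inner_self_nonneg[of \<Omega> u] by (simp add: L2_norm_def)

lemma L2_norm_scale: "L2_norm \<Omega> (\<lambda>x. a * u x) = \<bar>a\<bar> * L2_norm \<Omega> u"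
proof -
  have "L2_inner \<Omega> (\<lambda>x. a * u x) (\<lambda>x. a * u x) = a\<^sup>2 * L2_inner \<Omega> u u"
    by (simp add: L2_inner_scale_right L2_inner_commute[of \<Omega> "\<lambda>x. a * u x"] power2_eq_square)
  then show ?thesis
    by (simp add: L2_norm_def real_sqrt_mult)
qed

lemma discriminant_le_of_quadratic_nonneg:
  fixes A B C :: real
  assumes nonneg: "\<And>t. 0 \<le> A - 2 * t * C + t\<^sup>2 * B" and "0 \<le> B"
  shows "C\<^sup>2 \<le> A * B"
proof (cases "B = 0")
  case True
  have "C = 0"
  proof (rule ccontr)
    assume "C \<noteq> 0"
    then show False
      using nonneg[of "(A + 1) / (2 * C)"] True by (simp add: field_simps)
  qed
  then show ?thesis using True by simp
next
  case False
  then have "0 < B" using \<open>0 \<le> B\<close> by simp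
  then show ?thesis
    using nonneg[of "C / B"] by (simp add: field_simps power2_eq_square)
qed

lemma L2_Cauchy_Schwarz:
  assumes "u \<in> L2 \<Omega>" "v \<in> L2 \<Omega>"
  shows "\<bar>L2_inner \<Omega> u v\<bar> \<le> L2_norm \<Omega> u * L2_norm \<Omega> v"
proof -
  have "0 \<le> L2_inner \<Omega> u u - 2 * t * L2_inner \<Omega> u v + t\<^sup>2 * L2_inner \<Omega> v v" for t
  proof -
    define w where "w x = u x - t * v x" for x
    have w_eq: "w = (\<lambda>x. 1 * u x + (- t) * v x)"
      by (simp add: w_def fun_eq_iff)
    have w: "w \<in> L2 \<Omega>"
      unfolding w_eq by (rule L2_lin_comb[OF assms])
    have "L2_inner \<Omega> w w = L2_inner \<Omega> w u - t * L2_inner \<Omega> w v"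
      using L2_inner_lin_comb_right[OF w assms, of 1 "- t"] unfolding w_eq[symmetric] by simp
    also have "L2_inner \<Omega> w u = L2_inner \<Omega> u u - t * L2_inner \<Omega> u v"
      using L2_inner_lin_comb_right[OF assms(1) assms, of 1 "- t"]
      unfolding L2_inner_commute[of \<Omega> w] w_eq[symmetric] by simp
    also have "L2_inner \<Omega> w v = L2_inner \<Omega> u v - t * L2_inner \<Omega> v v"
      using L2_inner_lin_comb_right[OF assms(2) assms, of 1 "- t"]
      unfolding L2_inner_commute[of \<Omega> w] w_eq[symmetric] by (simp add: L2_inner_commute)
    finally have "L2_inner \<Omega> w w = L2_inner \<Omega> u u - 2 * t * L2_inner \<Omega> u v + t\<^sup>2 * L2_inner \<Omega> v v"
      by (simp add: algebra_simps power2_eq_square)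
    then show ?thesis
      using L2_inner_self_nonneg[of \<Omega> w] by simp
  qed
  then have "(L2_inner \<Omega> u v)\<^sup>2 \<le> L2_inner \<Omega> u u * L2_inner \<Omega> v v"
    by (rule discriminant_le_of_quadratic_nonneg) (rule L2_inner_self_nonneg)
  then have "sqrt ((L2_inner \<Omega> u v)\<^sup>2) \<le> sqrt (L2_inner \<Omega> u u * L2_inner \<Omega> v v)"
    by (rule real_sqrt_le_mono)
  then show ?thesis
    by (simp add: L2_norm_def real_sqrt_mult)
qed

section \<open>The descent lemma\<close>

locale L2_smooth =
  fixes \<Omega> :: "'a::euclidean_space set" and f :: "('a \<Rightarrow> real) \<Rightarrow> real"
    and gradf :: "('a \<Rightarrow> real) \<Rightarrow> 'a \<Rightarrow> real" and Lf :: real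
  assumes assumption_A: "assumption_A \<Omega> f gradf Lf"
begin

lemma gradf_L2: "u \<in> L2 \<Omega> \<Longrightarrow> gradf u \<in> L2 \<Omega>"
  using assumption_A unfolding assumption_A_def by blast

lemma gradf_frechet:
  "u \<in> L2 \<Omega> \<Longrightarrow> \<epsilon> > 0 \<Longrightarrow> \<exists>\<delta>>0. \<forall>h \<in> L2 \<Omega>. L2_norm \<Omega> h < \<delta> \<longrightarrow>
     \<bar>f (\<lambda>x. u x + h x) - f u - L2_inner \<Omega> (gradf u) h\<bar> \<le> \<epsilon> * L2_norm \<Omega> h"
  using assumption_A unfolding assumption_A_def by blast

lemma Lf_nonneg: "0 \<le> Lf"
  using assumption_A unfolding assumption_A_def by blast

lemma gradf_lipschitz:
  "u \<in> L2 \<Omega> \<Longrightarrow> v \<in> L2 \<Omega> \<Longrightarrow>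
     L2_norm \<Omega> (\<lambda>x. gradf u x - gradf v x) \<le> Lf * L2_norm \<Omega> (\<lambda>x. u x - v x)"
  using assumption_A unfolding assumption_A_def by blast

lemma f_bounded_below: "\<exists>c. \<forall>u \<in> L2 \<Omega>. c \<le> f u"
  using assumption_A unfolding assumption_A_def by blast

lemma has_real_derivative_along_line_at_0:
  assumes w: "w \<in> L2 \<Omega>" and h: "h \<in> L2 \<Omega>"
  shows "((\<lambda>s. f (\<lambda>x. w x + s * h x)) has_real_derivative L2_inner \<Omega> (gradf w) h) (at 0)"
  unfolding DERIV_def LIM_eq
proof (intro allI impI)
  fix e :: real assume "e > 0"
  define N where "N = L2_norm \<Omega> h + 1"
  have "N > 0" using L2_norm_nonneg[of \<Omega> h] by (simp add: N_def)
  obtain \<delta> where "\<delta> > 0" and frechet: "\<And>k. k \<in> L2 \<Omega> \<Longrightarrow> L2_norm \<Omega> k < \<delta> \<Longrightarrow>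
      \<bar>f (\<lambda>x. w x + k x) - f w - L2_inner \<Omega> (gradf w) k\<bar> \<le> e / N * L2_norm \<Omega> k"
    using gradf_frechet[OF w, of "e / N"] \<open>e > 0\<close> \<open>N > 0\<close> by auto
  show "\<exists>d>0. \<forall>s. s \<noteq> 0 \<and> norm (s - 0) < d \<longrightarrow>
          norm ((f (\<lambda>x. w x + (0 + s) * h x) - f (\<lambda>x. w x + 0 * h x)) / s
                - L2_inner \<Omega> (gradf w) h) < e"
  proof (intro exI[of _ "\<delta> / N"] conjI allI impI)
    show "\<delta> / N > 0" using \<open>\<delta> > 0\<close> \<open>N > 0\<close> by simp
    fix s :: real assume s: "s \<noteq> 0 \<and> norm (s - 0) < \<delta> / N"
    have "\<bar>s\<bar> * N < \<delta>"
      using s \<open>N > 0\<close> by (simp add: pos_less_divide_eq)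
    moreover have "\<bar>s\<bar> * L2_norm \<Omega> h \<le> \<bar>s\<bar> * N"
      by (simp add: N_def algebra_simps)
    ultimately have "L2_norm \<Omega> (\<lambda>x. s * h x) < \<delta>"
      by (simp add: L2_norm_scale)
    then have "\<bar>f (\<lambda>x. w x + s * h x) - f w - s * L2_inner \<Omega> (gradf w) h\<bar>
        \<le> e / N * (\<bar>s\<bar> * L2_norm \<Omega> h)"
      using frechet[of "\<lambda>x. s * h x"] L2_lin_comb[OF h h, of s 0]
      by (simp add: L2_norm_scale L2_inner_scale_right)
    also have "\<dots> < e * \<bar>s\<bar>"
      using s \<open>e > 0\<close> \<open>N > 0\<close> by (simp add: N_def field_simps)
    finally show "norm ((f (\<lambda>x. w x + (0 + s) * h x) - f (\<lambda>x. w x + 0 * h x)) / s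
                        - L2_inner \<Omega> (gradf w) h) < e"
      using s by (simp add: field_simps abs_divide)
  qed
qed

lemma has_real_derivative_along_line:
  assumes u: "u \<in> L2 \<Omega>" and h: "h \<in> L2 \<Omega>"
  shows "((\<lambda>t. f (\<lambda>x. u x + t * h x)) has_real_derivative
            L2_inner \<Omega> (gradf (\<lambda>x. u x + t * h x)) h) (at t)"
proof -
  have "(\<lambda>x. u x + t * h x) \<in> L2 \<Omega>"
    using L2_lin_comb[OF u h, of 1 t] by simp
  from has_real_derivative_along_line_at_0[OF this h]
  have "((\<lambda>s. f (\<lambda>x. u x + (s + t) * h x)) has_real_derivative
          L2_inner \<Omega> (gradf (\<lambda>x. u x + t * h x)) h) (at 0)"
    by (simp add: algebra_simps)
  then show ?thesis
    using DERIV_shift[of "\<lambda>t. f (\<lambda>x. u x + t * h x)" _ 0 t] by simp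
qed

text \<open>The classical proof: \<open>t \<mapsto> f (u + t (v - u)) - t \<langle>\<nabla>f u, v - u\<rangle> - Lf t\<^sup>2 \<parallel>v - u\<parallel>\<^sup>2 / 2\<close>
  is nonincreasing on \<open>[0, 1]\<close> by the Lipschitz bound on the gradient.\<close>
lemma descent_lemma:
  assumes u: "u \<in> L2 \<Omega>" and v: "v \<in> L2 \<Omega>"
  shows "f v \<le> f u + L2_inner \<Omega> (gradf u) (\<lambda>x. v x - u x)
                   + Lf / 2 * (L2_norm \<Omega> (\<lambda>x. v x - u x))\<^sup>2"
proof -
  define h where "h = (\<lambda>x. v x - u x)"
  have h: "h \<in> L2 \<Omega>"
    unfolding h_def by (rule L2_diff[OF v u])
  define N where "N = L2_norm \<Omega> h"
  define D where "D t = L2_inner \<Omega> (gradf (\<lambda>x. u x + t * h x)) h" for t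
  define \<psi> where "\<psi> t = f (\<lambda>x. u x + t * h x) - t * D 0 - Lf / 2 * t\<^sup>2 * N\<^sup>2" for t
  have line_L2: "(\<lambda>x. u x + t * h x) \<in> L2 \<Omega>" for t
    using L2_lin_comb[OF u h, of 1] by simp
  have \<psi>_deriv: "(\<psi> has_real_derivative (D t - D 0 - Lf * t * N\<^sup>2)) (at t)" for t
    unfolding \<psi>_def D_def
    by (auto intro!: derivative_eq_intros has_real_derivative_along_line[OF u h]
        simp: power2_eq_square)
  have D_increment: "D t - D 0 \<le> Lf * t * N\<^sup>2" if "0 < t" for t
  proof -
    have "D t - D 0 = L2_inner \<Omega> (\<lambda>x. gradf (\<lambda>x. u x + t * h x) x - gradf u x) h"
      by (simp add: D_def L2_inner_diff_left[OF gradf_L2[OF line_L2] gradf_L2[OF u] h])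
    also have "\<dots> \<le> L2_norm \<Omega> (\<lambda>x. gradf (\<lambda>x. u x + t * h x) x - gradf u x) * N"
      unfolding N_def
      using L2_Cauchy_Schwarz[OF L2_diff[OF gradf_L2[OF line_L2[of t]] gradf_L2[OF u]] h]
      by (meson abs_ge_self order_trans)
    also have "\<dots> \<le> Lf * L2_norm \<Omega> (\<lambda>x. t * h x) * N"
      using gradf_lipschitz[OF line_L2 u, of t] L2_norm_nonneg[of \<Omega> h]
      by (simp add: N_def mult_right_mono)
    also have "\<dots> = Lf * t * N\<^sup>2"
      using that by (simp add: L2_norm_scale N_def power2_eq_square)
    finally show ?thesis .
  qed
  have "continuous_on {0..1} \<psi>"
    using \<psi>_deriv by (meson DERIV_isCont continuous_at_imp_continuous_on)
  then have "\<psi> 1 \<le> \<psi> 0"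
    by (rule DERIV_nonpos_imp_decreasing_open[rotated 2]) (use \<psi>_deriv D_increment in force)+
  moreover have "(\<lambda>x. u x + 1 * h x) = v"
    by (simp add: h_def)
  ultimately show ?thesis
    by (simp add: \<psi>_def D_def N_def h_def)
qed

end

section \<open>The scalar proximal problem\<close>

lemma second_deriv_nonneg_at_interior_min:
  fixes h h' :: "real \<Rightarrow> real"
  assumes y: "a < y" "y < b"
    and h_deriv: "\<And>v. a < v \<Longrightarrow> v < b \<Longrightarrow> (h has_real_derivative h' v) (at v)"
    and h'_deriv: "(h' has_real_derivative c) (at y)"
    and min: "\<And>v. a < v \<Longrightarrow> v < b \<Longrightarrow> h y \<le> h v"
  shows "0 \<le> c"
proof (rule ccontr)
  assume "\<not> 0 \<le> c"
  have "h' y = 0"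
  proof (rule DERIV_local_min[OF h_deriv[OF y]])
    show "0 < min (y - a) (b - y)" using y by simp
    show "\<forall>v. \<bar>y - v\<bar> < min (y - a) (b - y) \<longrightarrow> h y \<le> h v"
      by (intro allI impI min) (auto simp: abs_if split: if_splits)
  qed
  moreover obtain d where "d > 0" and h'_dec: "\<And>s. s > 0 \<Longrightarrow> s < d \<Longrightarrow> h' (y + s) < h' y"
    using DERIV_neg_dec_right[OF h'_deriv] \<open>\<not> 0 \<le> c\<close> by auto
  define m where "m = min d (b - y)"
  have "0 < m" "m \<le> d" "m \<le> b - y"
    using \<open>d > 0\<close> y by (auto simp: m_def)
  define y' where "y' = y + m / 2"
  have y': "y < y'" "y' < b" "y' - y < d"
    using \<open>0 < m\<close> \<open>m \<le> d\<close> \<open>m \<le> b - y\<close> unfolding y'_def by linarith+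
  have "continuous_on {y..y'} h"
    using h_deriv y y' by (intro continuous_at_imp_continuous_on ballI DERIV_isCont[OF h_deriv]) auto
  ultimately have "h y' < h y"
  proof (intro DERIV_neg_imp_decreasing_open[OF \<open>y < y'\<close>] exI conjI)
    fix x assume x: "y < x" "x < y'"
    show "(h has_real_derivative h' x) (at x)"
      using x y y' by (intro h_deriv) auto
    show "h' x < 0"
      using h'_dec[of "x - y"] x y' \<open>h' y = 0\<close> by simp
  qed
  with min[of y'] y y' show False by simp
qed

definition scalar_prox_objective :: "(real \<Rightarrow> ereal) \<Rightarrow> real \<Rightarrow> real \<Rightarrow> real \<Rightarrow> ereal" where
  "scalar_prox_objective g L p v = ereal (L / 2 * v\<^sup>2 - p * v) + g v"

definition scalar_prox_argmin :: "(real \<Rightarrow> ereal) \<Rightarrow> real \<Rightarrow> real \<Rightarrow> real \<Rightarrow> bool" where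
  "scalar_prox_argmin g L p y \<longleftrightarrow> (\<forall>v. scalar_prox_objective g L p y \<le> scalar_prox_objective g L p v)"

text \<open>Completing the square: \<open>y\<close> minimises \<open>L/2 v\<^sup>2 - p v + g v\<close> iff it minimises
  \<open>-(p - L y) v + L/2 (v - y)\<^sup>2 + g v\<close>.\<close>
lemma scalar_prox_argmin_mem_GL:
  assumes "scalar_prox_argmin g L p y"
  shows "y \<in> GL g L (p - L * y)"
  unfolding GL_def
proof (intro CollectI allI)
  fix v
  have "ereal (L / 2 * y\<^sup>2 - p * y) + g y \<le> ereal (L / 2 * v\<^sup>2 - p * v) + g v"
    using assms by (simp add: scalar_prox_argmin_def scalar_prox_objective_def)
  moreover have "- (p - L * y) * v + L / 2 * (v - y)\<^sup>2 - (- (p - L * y) * y + L / 2 * (y - y)\<^sup>2)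
      = (L / 2 * v\<^sup>2 - p * v) - (L / 2 * y\<^sup>2 - p * y)"
    by (simp add: algebra_simps power2_eq_square)
  ultimately show "ereal (- (p - L * y) * y + L / 2 * (y - y)\<^sup>2) + g y
      \<le> ereal (- (p - L * y) * v + L / 2 * (v - y)\<^sup>2) + g v"
    by (cases "g y"; cases "g v") auto
qed

locale prox_penalty =
  fixes g :: "real \<Rightarrow> ereal" and L :: real
  assumes assumption_B: "assumption_B g" and L_pos: "0 < L"
begin

lemma g_zero: "g 0 = 0"
  using assumption_B by (simp add: assumption_B_def)

lemma g_nonneg: "0 \<le> g u"
  using assumption_B by (simp add: assumption_B_def)

lemma g_symmetric: "g (- u) = g u"
  using assumption_B by (simp add: assumption_B_def)

lemma g_finite_iff: "g u \<noteq> \<infinity> \<longleftrightarrow> g u = ereal (real_of_ereal (g u))"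
  using g_nonneg[of u] by (cases "g u") auto

lemma g_borel_measurable [measurable]: "g \<in> borel_measurable borel"
proof (rule borel_measurableI_greater)
  fix c
  have "eventually (\<lambda>z. c < g z) (at x)" if "c < g x" for x
  proof (rule less_LiminfD)
    show "c < Liminf (at x) g"
      using that assumption_B unfolding assumption_B_def lsc_ereal_def
      by (meson less_le_trans)
  qed
  then have "open {x. c < g x}"
    unfolding open_dist by (force simp: eventually_at dist_commute)
  then show "{x \<in> space borel. c < g x} \<in> sets borel"
    by simp
qed

lemma scalar_prox_argmin_finite:
  assumes "scalar_prox_argmin g L p y"
  shows "g y = ereal (real_of_ereal (g y))"
proof -
  have "scalar_prox_objective g L p y \<le> scalar_prox_objective g L p 0"
    using assms by (simp add: scalar_prox_argmin_def)
  then show ?thesis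
    unfolding g_finite_iff[symmetric] by (auto simp: scalar_prox_objective_def g_zero)
qed

lemma scalar_prox_argmin_real:
  assumes "scalar_prox_argmin g L p y" and "g v = ereal G"
  shows "L / 2 * y\<^sup>2 - p * y + real_of_ereal (g y) \<le> L / 2 * v\<^sup>2 - p * v + G"
proof -
  have "scalar_prox_objective g L p y \<le> scalar_prox_objective g L p v"
    using assms(1) by (simp add: scalar_prox_argmin_def)
  then show ?thesis
    using scalar_prox_argmin_finite[OF assms(1)] assms(2)
    by (simp add: scalar_prox_objective_def) (metis plus_ereal.simps(1) ereal_less_eq(3))
qed

lemma scalar_prox_argmin_uminus:
  assumes "scalar_prox_argmin g L p y"
  shows "scalar_prox_argmin g L (- p) (- y)"
  unfolding scalar_prox_argmin_def
proof
  fix v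
  have "scalar_prox_objective g L p y \<le> scalar_prox_objective g L p (- v)"
    using assms by (simp add: scalar_prox_argmin_def)
  then show "scalar_prox_objective g L (- p) (- y) \<le> scalar_prox_objective g L (- p) v"
    by (simp add: scalar_prox_objective_def g_symmetric)
qed

end

context prox_penalty
begin

lemma exists_pos_g_finite: "\<exists>v>0. g v \<noteq> \<infinity>"
proof -
  obtain u where "u \<noteq> 0" "g u < \<infinity>"
    using assumption_B unfolding assumption_B_def by blast
  then show ?thesis
    using g_symmetric[of u] by (intro exI[of _ "\<bar>u\<bar>"]) (auto simp: abs_if)
qed

text \<open>Comparing a positive minimiser \<open>y\<close> with \<open>0\<close> gives \<open>c < p y\<close> where \<open>c < g y\<close>, and comparing
  it with a point \<open>v\<^sub>0 \<ge> 2 y\<close> where \<open>g\<close> is finite bounds \<open>p\<close>.\<close>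
lemma scalar_prox_argmin_lower_bound:
  assumes argmin: "scalar_prox_argmin g L p y" and "0 < y"
    and "y \<le> v0 / 2" and g_v0: "g v0 = ereal G0" and "ereal c < g y"
  shows "c < (L * v0 + 2 * G0 / v0) * y"
proof -
  define Y where "Y = real_of_ereal (g y)"
  have "g y = ereal Y"
    using scalar_prox_argmin_finite[OF argmin] by (simp add: Y_def)
  then have "c < Y"
    using \<open>ereal c < g y\<close> by simp
  have "0 \<le> Y"
    using g_nonneg[of y] by (simp add: Y_def real_of_ereal_pos)
  have "0 < v0"
    using \<open>0 < y\<close> \<open>y \<le> v0 / 2\<close> by simp
  have "0 \<le> L / 2 * y\<^sup>2"
    using L_pos by simp
  moreover have "L / 2 * y\<^sup>2 - p * y + Y \<le> 0"
    using scalar_prox_argmin_real[OF argmin, of 0 0] g_zero by (simp add: Y_def zero_ereal_def)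
  ultimately have "c < p * y" and "0 \<le> p * y"
    using \<open>c < Y\<close> \<open>0 \<le> Y\<close> by linarith+
  then have "0 \<le> p"
    using \<open>0 < y\<close> by (simp add: zero_le_mult_iff)
  have "L / 2 * y\<^sup>2 - p * y + Y \<le> L / 2 * v0\<^sup>2 - p * v0 + G0"
    using scalar_prox_argmin_real[OF argmin g_v0] by (simp add: Y_def)
  then have "p * (v0 - y) \<le> L / 2 * v0\<^sup>2 + G0"
    using \<open>0 \<le> L / 2 * y\<^sup>2\<close> \<open>0 \<le> Y\<close> by (simp add: right_diff_distrib)
  moreover have "p * (v0 / 2) \<le> p * (v0 - y)"
    using \<open>y \<le> v0 / 2\<close> \<open>0 \<le> p\<close> by (intro mult_left_mono) auto
  ultimately have "p * (v0 / 2) \<le> L / 2 * v0\<^sup>2 + G0"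
    by linarith
  then have "p \<le> L * v0 + 2 * G0 / v0"
    using \<open>0 < v0\<close> by (simp add: field_simps power2_eq_square)
  then show ?thesis
    using \<open>c < p * y\<close> \<open>0 < y\<close> by (smt (verit) mult_right_mono)
qed

lemma scalar_prox_argmin_gap_of_B3c:
  assumes "B3c g"
  obtains \<delta> where "\<delta> > 0" "\<And>p y. scalar_prox_argmin g L p y \<Longrightarrow> 0 < y \<Longrightarrow> \<delta> \<le> y"
proof -
  obtain c where "0 < c" and "ereal c < Liminf (at_right 0) g"
    using assms ereal_dense2[of 0 "Liminf (at_right 0) g"] unfolding B3c_def by auto
  then have "eventually (\<lambda>y. ereal c < g y) (at_right 0)"
    by (intro less_LiminfD) simp
  then obtain \<eta> where "\<eta> > 0" and g_large: "\<And>y. 0 < y \<Longrightarrow> y < \<eta> \<Longrightarrow> ereal c < g y"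
    unfolding eventually_at_right_field by auto
  obtain v0 where "v0 > 0" and "g v0 \<noteq> \<infinity>"
    using exists_pos_g_finite by blast
  then obtain G0 where g_v0: "g v0 = ereal G0" and "0 \<le> G0"
    using g_nonneg[of v0] by (cases "g v0") auto
  define M where "M = L * v0 + 2 * G0 / v0 + 1"
  have "M > 0"
    using \<open>v0 > 0\<close> \<open>0 \<le> G0\<close> L_pos by (simp add: M_def add_nonneg_pos)
  define \<delta> where "\<delta> = min \<eta> (min (v0 / 2) (c / M))"
  have "\<delta> \<le> y" if argmin: "scalar_prox_argmin g L p y" and "0 < y" for p y
  proof (rule ccontr)
    assume "\<not> \<delta> \<le> y"
    then have y_small: "y < \<eta>" "y \<le> v0 / 2" "y < c / M"
      by (auto simp: \<delta>_def)
    then have "y * M < c"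
      using \<open>M > 0\<close> by (simp add: pos_less_divide_eq)
    have "c < (L * v0 + 2 * G0 / v0) * y"
      using scalar_prox_argmin_lower_bound[OF argmin \<open>0 < y\<close> y_small(2) g_v0 g_large] y_small \<open>0 < y\<close>
      by blast
    with \<open>y * M < c\<close> \<open>0 < y\<close> show False
      by (simp add: M_def algebra_simps)
  qed
  moreover have "\<delta> > 0"
    using \<open>\<eta> > 0\<close> \<open>v0 > 0\<close> \<open>0 < c\<close> \<open>M > 0\<close> by (simp add: \<delta>_def)
  ultimately show ?thesis
    using that by blast
qed

text \<open>If \<open>g'' < -L\<close> on \<open>(0, \<eta>)\<close>, the scalar objective is strictly concave there and has
  no minimiser in that interval.\<close>
lemma scalar_prox_argmin_gap_of_concave:
  assumes smooth: "\<And>u. 0 < u \<Longrightarrow> u < \<eta> \<Longrightarrow> g u \<noteq> \<infinity> \<and>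
      (\<lambda>v. real_of_ereal (g v)) differentiable (at u) \<and>
      deriv (\<lambda>v. real_of_ereal (g v)) differentiable (at u)"
    and concave: "\<And>u. 0 < u \<Longrightarrow> u < \<eta> \<Longrightarrow> g2 g u < - L"
    and argmin: "scalar_prox_argmin g L p y" and "0 < y"
  shows "\<eta> \<le> y"
proof (rule ccontr)
  assume "\<not> \<eta> \<le> y"
  define G where "G v = real_of_ereal (g v)" for v
  have "0 \<le> L + g2 g y"
  proof (rule second_deriv_nonneg_at_interior_min[OF \<open>0 < y\<close>])
    show "y < \<eta>" using \<open>\<not> \<eta> \<le> y\<close> by simp
    show "((\<lambda>v. L / 2 * v\<^sup>2 - p * v + G v) has_real_derivative L * v - p + deriv G v) (at v)"
      if "0 < v" "v < \<eta>" for v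
      using smooth[OF that] unfolding G_def
      by (auto intro!: derivative_eq_intros simp: DERIV_deriv_iff_real_differentiable power2_eq_square)
    show "((\<lambda>v. L * v - p + deriv G v) has_real_derivative L + g2 g y) (at y)"
      using smooth[OF \<open>0 < y\<close> \<open>y < \<eta>\<close>] unfolding G_def g2_def
      by (auto intro!: derivative_eq_intros simp: DERIV_deriv_iff_real_differentiable)
    show "L / 2 * y\<^sup>2 - p * y + G y \<le> L / 2 * v\<^sup>2 - p * v + G v" if "0 < v" "v < \<eta>" for v
      using scalar_prox_argmin_real[OF argmin] smooth[OF that] g_finite_iff[of v]
      unfolding G_def by auto
  qed
  with concave[OF \<open>0 < y\<close>] \<open>\<not> \<eta> \<le> y\<close> show False
    by simp
qed

text \<open>The hypothesis \<open>s0 g < 1 / L\<close> says exactly that \<open>g'' < -L\<close> near \<open>0\<^sup>+\<close>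
  in cases (B3a) and (B3b).\<close>
lemma g2_eventually_less:
  assumes "\<not> B3c g" and "s0 g < 1 / L"
  shows "eventually (\<lambda>u. g2 g u < - L) (at_right 0)"
proof (cases "B3b g")
  case True
  then have "eventually (\<lambda>u. ereal (g2 g u) < ereal (- L)) (at_right 0)"
    unfolding B3b_def tendsto_MInfty by blast
  then show ?thesis by simp
next
  case False
  then have "B3a g"
    using assms(1) assumption_B unfolding assumption_B_def by blast
  define l where "l = Limsup (at_right 0) (\<lambda>u. ereal (g2 g u))"
  obtain r where r: "l = ereal r" "r < 0"
    using \<open>B3a g\<close> unfolding B3a_def l_def[symmetric] by (cases l) auto
  have "- 1 / r < 1 / L"
    using assms(1,2) False r by (simp add: s0_def l_def)
  then have "L < - r"
    using r(2) L_pos by (simp add: field_simps)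
  then have "l < ereal (- L)"
    using r by simp
  then have "eventually (\<lambda>u. ereal (g2 g u) < ereal (- L)) (at_right 0)"
    unfolding l_def by (rule Limsup_lessD)
  then show ?thesis by simp
qed

lemma scalar_prox_argmin_gap_pos:
  assumes "s0 g < 1 / L"
  obtains \<delta> where "\<delta> > 0" "\<And>p y. scalar_prox_argmin g L p y \<Longrightarrow> 0 < y \<Longrightarrow> \<delta> \<le> y"
proof (cases "B3c g")
  case True
  then show ?thesis
    using that scalar_prox_argmin_gap_of_B3c by blast
next
  case False
  then have "twice_diff_near0 g"
    using assumption_B unfolding assumption_B_def B3a_def B3b_def by blast
  then obtain \<epsilon> where "\<epsilon> > 0" and smooth: "\<And>u. 0 < u \<Longrightarrow> u < \<epsilon> \<Longrightarrow> g u \<noteq> \<infinity> \<and>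
      (\<lambda>v. real_of_ereal (g v)) differentiable (at u) \<and>
      deriv (\<lambda>v. real_of_ereal (g v)) differentiable (at u)"
    unfolding twice_diff_near0_def by auto
  obtain \<eta> where "\<eta> > 0" and concave: "\<And>u. 0 < u \<Longrightarrow> u < \<eta> \<Longrightarrow> g2 g u < - L"
    using g2_eventually_less[OF False assms] unfolding eventually_at_right_field by auto
  show ?thesis
  proof (rule that)
    show "min \<epsilon> \<eta> > 0"
      using \<open>\<epsilon> > 0\<close> \<open>\<eta> > 0\<close> by simp
    show "min \<epsilon> \<eta> \<le> y" if "scalar_prox_argmin g L p y" "0 < y" for p y
      using scalar_prox_argmin_gap_of_concave[of "min \<epsilon> \<eta>"] smooth concave that by auto
  qed
qed

lemma scalar_prox_argmin_gap:
  assumes "s0 g < 1 / L"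
  obtains \<delta> where "\<delta> > 0" "\<And>p y. scalar_prox_argmin g L p y \<Longrightarrow> y \<noteq> 0 \<Longrightarrow> \<delta> \<le> \<bar>y\<bar>"
proof -
  obtain \<delta> where "\<delta> > 0" and gap: "\<And>p y. scalar_prox_argmin g L p y \<Longrightarrow> 0 < y \<Longrightarrow> \<delta> \<le> y"
    using scalar_prox_argmin_gap_pos[OF assms] by blast
  have "\<delta> \<le> \<bar>y\<bar>" if "scalar_prox_argmin g L p y" "y \<noteq> 0" for p y
    using gap[OF that(1)] gap[OF scalar_prox_argmin_uminus[OF that(1)]] that(2)
    by (cases "0 < y") auto
  with \<open>\<delta> > 0\<close> show ?thesis
    using that by blast
qed

end

section \<open>Limits of the scalar minimisers\<close>

text \<open>\<open>in_oscillation_range ys c\<close> means \<open>liminf ys \<le> c \<le> limsup ys\<close>.\<close>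
definition in_oscillation_range :: "(nat \<Rightarrow> real) \<Rightarrow> real \<Rightarrow> bool" where
  "in_oscillation_range ys c \<longleftrightarrow>
     (\<forall>e>0. (\<exists>\<^sub>F n in sequentially. ys n < c + e) \<and> (\<exists>\<^sub>F n in sequentially. c - e < ys n))"

lemma in_oscillation_range_shift:
  assumes "in_oscillation_range xs c" and "(\<lambda>n. ys n - xs n) \<longlonglongrightarrow> 0"
  shows "in_oscillation_range ys c"
  unfolding in_oscillation_range_def
proof (intro allI impI conjI)
  fix e :: real assume "e > 0"
  then have close: "eventually (\<lambda>n. \<bar>ys n - xs n\<bar> < e / 2) sequentially"
    using tendstoD[OF assms(2), of "e / 2"] by (simp add: dist_real_def)
  have below: "\<exists>\<^sub>F n in sequentially. xs n < c + e / 2"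
    and above: "\<exists>\<^sub>F n in sequentially. c - e / 2 < xs n"
    using assms(1) \<open>e > 0\<close> unfolding in_oscillation_range_def by (meson half_gt_zero)+
  show "\<exists>\<^sub>F n in sequentially. ys n < c + e"
    using frequently_eventually_frequently[OF below close]
    by (rule frequently_elim1) arith
  show "\<exists>\<^sub>F n in sequentially. c - e < ys n"
    using frequently_eventually_frequently[OF above close]
    by (rule frequently_elim1) arith
qed

lemma in_oscillation_range_eventually_const:
  assumes "in_oscillation_range ys c" and const: "eventually (\<lambda>n. ys n = a) sequentially"
  shows "c = a"
proof (rule ccontr)
  assume "c \<noteq> a"
  then have "\<bar>c - a\<bar> > 0" by simp
  then have below: "\<exists>\<^sub>F n in sequentially. ys n < c + \<bar>c - a\<bar>"
    and above: "\<exists>\<^sub>F n in sequentially. c - \<bar>c - a\<bar> < ys n"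
    using assms(1) unfolding in_oscillation_range_def by blast+
  from frequently_eventually_frequently[OF below const] frequently_eventually_frequently[OF above const]
  have "a < c + \<bar>c - a\<bar>" "c - \<bar>c - a\<bar> < a"
    by (auto elim: frequentlyE)
  then show False
    by arith
qed

lemma sgn_eq_if_close_with_gap:
  fixes a b :: real
  assumes "\<bar>b - a\<bar> < \<delta>" "a \<noteq> 0 \<Longrightarrow> \<delta> \<le> \<bar>a\<bar>" "b \<noteq> 0 \<Longrightarrow> \<delta> \<le> \<bar>b\<bar>"
  shows "sgn b = sgn a"
  using assms by (cases "a = 0"; cases "b = 0"; cases "0 < a"; cases "0 < b") (auto simp: sgn_if)

lemma LIMSEQ_of_abs_diff_less_divide_Suc:
  fixes xs :: "nat \<Rightarrow> real"
  assumes "\<And>n. \<bar>xs n - l\<bar> < C / Suc n"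
  shows "xs \<longlonglongrightarrow> l"
proof (rule LIM_zero_cancel, rule Lim_null_comparison)
  show "\<forall>\<^sub>F n in sequentially. norm (xs n - l) \<le> C * inverse (real (Suc n))"
    using assms by (intro always_eventually allI) (simp add: less_imp_le field_simps)
  show "(\<lambda>n. C * inverse (real (Suc n))) \<longlonglongrightarrow> 0"
    using tendsto_mult_right_zero[OF LIMSEQ_inverse_real_of_nat] .
qed

lemma exists_close_in_interval:
  fixes C :: "real set"
  assumes "is_interval C" and "a \<in> C" "b \<in> C" and "a < c + e" "c - e < b" and "0 < e"
  shows "\<exists>y \<in> C. \<bar>y - c\<bar> < e"
proof -
  consider "c \<le> a" | "b \<le> c" | "a < c" "c < b"
    by linarith
  then show ?thesis
  proof cases
    case 3
    then have "c \<in> C"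
      using assms(1-3) unfolding is_interval_1 by (meson less_imp_le)
    then show ?thesis
      using \<open>0 < e\<close> by (intro bexI[of _ c]) auto
  qed (use assms in force)+
qed

lemma conv_inf_memI:
  fixes F :: "real \<Rightarrow> real set"
  assumes zs: "zs \<longlonglongrightarrow> z" and ys: "eventually (\<lambda>n. ys n \<in> F (zs n)) sequentially"
    and osc: "in_oscillation_range ys c"
  shows "c \<in> conv_inf F z"
proof -
  define C where "C k = convex hull (\<Union>x' \<in> {x'. \<bar>x' - z\<bar> < 1 / real (Suc k)}. F x')" for k
  have "\<exists>y \<in> C k. \<bar>y - c\<bar> < 1 / Suc k" for k
  proof -
    define e where "e = 1 / real (Suc k)"
    have "e > 0" by (simp add: e_def)
    then have "eventually (\<lambda>n. \<bar>zs n - z\<bar> < e) sequentially"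
      using zs by (auto simp: tendsto_iff dist_real_def)
    with ys have in_C: "eventually (\<lambda>n. ys n \<in> C k) sequentially"
      by eventually_elim (auto simp: C_def e_def intro: hull_inc)
    have below: "\<exists>\<^sub>F n in sequentially. ys n < c + e"
      and above: "\<exists>\<^sub>F n in sequentially. c - e < ys n"
      using osc \<open>e > 0\<close> unfolding in_oscillation_range_def by blast+
    from frequently_eventually_frequently[OF below in_C] frequently_eventually_frequently[OF above in_C]
    obtain n1 n2 where "ys n1 < c + e" "ys n1 \<in> C k" "c - e < ys n2" "ys n2 \<in> C k"
      by (auto elim!: frequentlyE)
    then show ?thesis
      unfolding e_def by (intro exists_close_in_interval) (auto simp: C_def is_interval_convex_1)
  qed
  then obtain yy where yy: "\<And>k. yy k \<in> C k" "\<And>k. \<bar>yy k - c\<bar> < 1 / Suc k"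
    by metis
  have "yy \<longlonglongrightarrow> c"
    by (rule LIMSEQ_of_abs_diff_less_divide_Suc[OF yy(2)])
  then show ?thesis
    unfolding conv_inf_def outer_limit_def C_def[symmetric]
    using yy(1) strict_mono_id by (intro CollectI exI[of _ id] exI[of _ yy]) auto
qed

lemma eventually_sgn_eq:
  fixes u :: "nat \<Rightarrow> real"
  assumes steps: "(\<lambda>k. u (Suc k) - u k) \<longlonglongrightarrow> 0" and "\<delta> > 0"
    and gap: "\<And>k. u (Suc k) \<noteq> 0 \<Longrightarrow> \<delta> \<le> \<bar>u (Suc k)\<bar>"
  shows "\<exists>K. \<forall>k\<ge>K. sgn (u k) = sgn (u K)"
proof -
  obtain K0 where K0: "\<And>k. k \<ge> K0 \<Longrightarrow> \<bar>u (Suc k) - u k\<bar> < \<delta>"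
    using steps \<open>\<delta> > 0\<close> unfolding LIMSEQ_def dist_real_def by (metis diff_zero)
  have sgn_step: "sgn (u (Suc k)) = sgn (u k)" if "Suc K0 \<le> k" for k
  proof -
    obtain j where k: "k = Suc j" and "K0 \<le> j"
      using \<open>Suc K0 \<le> k\<close> by (cases k) auto
    have "\<bar>u (Suc k) - u k\<bar> < \<delta>"
      using K0 \<open>Suc K0 \<le> k\<close> by simp
    then show ?thesis
      using gap[of j] gap[of k] unfolding k by (rule sgn_eq_if_close_with_gap)
  qed
  have "sgn (u k) = sgn (u (Suc K0))" if "Suc K0 \<le> k" for k
    using that by (induction k rule: dec_induct) (use sgn_step in auto)
  then show ?thesis by blast
qed

context prox_penalty
begin

lemma zero_mem_GL_limit:
  assumes zs: "zs \<longlonglongrightarrow> z" and ev: "eventually (\<lambda>n. 0 \<in> GL g L (zs n)) sequentially"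
  shows "0 \<in> GL g L z"
  unfolding GL_def
proof (intro CollectI allI)
  fix v
  show "ereal (- z * 0 + L / 2 * (0 - 0)\<^sup>2) + g 0 \<le> ereal (- z * v + L / 2 * (v - 0)\<^sup>2) + g v"
  proof (cases "g v = \<infinity>")
    case False
    then obtain G where G: "g v = ereal G"
      using g_finite_iff by blast
    have "eventually (\<lambda>n. 0 \<le> - zs n * v + L / 2 * v\<^sup>2 + G) sequentially"
      using ev
    proof eventually_elim
      case (elim n)
      then have "ereal (- zs n * 0 + L / 2 * (0 - 0)\<^sup>2) + g 0
          \<le> ereal (- zs n * v + L / 2 * (v - 0)\<^sup>2) + g v"
        unfolding GL_def by blast
      then show ?case
        by (simp add: g_zero G)
    qed
    moreover have "(\<lambda>n. - zs n * v + L / 2 * v\<^sup>2 + G) \<longlonglongrightarrow> - z * v + L / 2 * v\<^sup>2 + G"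
      by (intro tendsto_intros zs)
    ultimately have "0 \<le> - z * v + L / 2 * v\<^sup>2 + G"
      using tendsto_lowerbound by (metis trivial_limit_sequentially)
    then show ?thesis
      by (simp add: g_zero G)
  qed (simp add: g_zero)
qed

lemma mem_G_sets_if_eventually_sgn:
  assumes zs: "zs \<longlonglongrightarrow> z" and ys_GL: "\<And>n. ys n \<in> GL g L (zs n)"
    and cluster: "in_oscillation_range ys c"
    and sgn_ys: "eventually (\<lambda>n. sgn (ys n) = s) sequentially"
  shows "c \<in> Gzero g L z \<union> conv_inf (Gplus g L) z \<union> conv_inf (Gminus g L) z"
proof (cases s "0 :: real" rule: linorder_cases)
  case equal
  have ys_zero: "eventually (\<lambda>n. ys n = 0) sequentially"
    using sgn_ys by eventually_elim (use equal in \<open>simp add: sgn_0_0\<close>)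
  then have "0 \<in> GL g L z"
    using ys_GL by (intro zero_mem_GL_limit[OF zs]) (metis (mono_tags, lifting) eventually_mono)
  moreover have "c = 0"
    by (rule in_oscillation_range_eventually_const[OF cluster ys_zero])
  ultimately show ?thesis
    by (simp add: Gzero_def)
next
  case greater
  have "eventually (\<lambda>n. ys n \<in> Gplus g L (zs n)) sequentially"
    using sgn_ys by eventually_elim (use greater in \<open>auto simp: Gplus_def ys_GL sgn_greater\<close>)
  then show ?thesis
    using conv_inf_memI[OF zs _ cluster] by blast
next
  case less
  have "eventually (\<lambda>n. ys n \<in> Gminus g L (zs n)) sequentially"
    using sgn_ys by eventually_elim (use less in \<open>auto simp: Gminus_def ys_GL sgn_less\<close>)
  then show ?thesis
    using conv_inf_memI[OF zs _ cluster] by blast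
qed

text \<open>The deterministic core of the theorem, for the values \<open>u k = u\<^sub>k(x)\<close> and
  \<open>d k = \<nabla>f(u\<^sub>k)(x)\<close> at a fixed point \<open>x\<close>: by the gap, the sign of \<open>u k\<close> is eventually constant.\<close>
lemma cluster_point_mem_G_sets:
  assumes s0: "s0 g < 1 / L"
    and argmin: "\<And>k. scalar_prox_argmin g L (L * u k - d k) (u (Suc k))"
    and steps: "(\<lambda>k. u (Suc k) - u k) \<longlonglongrightarrow> 0"
    and r: "strict_mono r" and d_lim: "(\<lambda>n. d (r n)) \<longlonglongrightarrow> d0"
    and cluster: "in_oscillation_range (\<lambda>n. u (r n)) c"
  shows "c \<in> Gzero g L (- d0) \<union> conv_inf (Gplus g L) (- d0) \<union> conv_inf (Gminus g L) (- d0)"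
proof -
  define ys where "ys n = u (Suc (r n))" for n
  define zs where "zs = (\<lambda>n. L * u (r n) - d (r n) - L * ys n)"
  have steps_r: "(\<lambda>n. ys n - u (r n)) \<longlonglongrightarrow> 0"
    using LIMSEQ_subseq_LIMSEQ[OF steps r] by (simp add: ys_def o_def)
  have "(\<lambda>n. - L * (ys n - u (r n)) - d (r n)) \<longlonglongrightarrow> - L * 0 - d0"
    by (intro tendsto_intros steps_r d_lim)
  moreover have "(\<lambda>n. - L * (ys n - u (r n)) - d (r n)) = zs"
    by (simp add: zs_def fun_eq_iff algebra_simps)
  ultimately have zs_lim: "zs \<longlonglongrightarrow> - d0"
    by simp
  obtain \<delta> where "\<delta> > 0" and gap: "\<And>p y. scalar_prox_argmin g L p y \<Longrightarrow> y \<noteq> 0 \<Longrightarrow> \<delta> \<le> \<bar>y\<bar>"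
    using scalar_prox_argmin_gap[OF s0] by blast
  obtain K where K: "\<And>k. k \<ge> K \<Longrightarrow> sgn (u k) = sgn (u K)"
    using eventually_sgn_eq[OF steps \<open>\<delta> > 0\<close> gap[OF argmin]] by blast
  have "eventually (\<lambda>n. K \<le> Suc (r n)) sequentially"
    unfolding eventually_sequentially
  proof (intro exI allI impI)
    fix n assume "K \<le> n"
    then show "K \<le> Suc (r n)"
      using seq_suble[OF r, of n] by linarith
  qed
  then have "eventually (\<lambda>n. sgn (ys n) = sgn (u K)) sequentially"
    by eventually_elim (unfold ys_def, rule K)
  moreover have "ys n \<in> GL g L (zs n)" for n
    unfolding ys_def zs_def by (rule scalar_prox_argmin_mem_GL[OF argmin])
  ultimately show ?thesis
    using mem_G_sets_if_eventually_sgn[OF zs_lim _ in_oscillation_range_shift[OF cluster steps_r]]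
    by blast
qed

end

section \<open>Pointwise consequences of \<open>L\<^sup>2\<close> estimates\<close>

lemma ae_tendsto_zero_if_summable_L2_norms:
  assumes w: "\<And>k. w k \<in> L2 \<Omega>" and summable: "summable (\<lambda>k. (L2_norm \<Omega> (w k))\<^sup>2)"
  shows "AE x in lebesgue_on \<Omega>. (\<lambda>k. w k x) \<longlonglongrightarrow> 0"
proof -
  have [measurable]: "w k \<in> borel_measurable (lebesgue_on \<Omega>)" for k
    using w by (simp add: L2_def)
  have meas: "(\<lambda>x. ennreal ((w k x)\<^sup>2)) \<in> borel_measurable (lebesgue_on \<Omega>)" for k
    by measurable
  have norms: "(\<integral>\<^sup>+x. ennreal ((w k x)\<^sup>2) \<partial>lebesgue_on \<Omega>) = ennreal ((L2_norm \<Omega> (w k))\<^sup>2)" for k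
    using w[of k] unfolding L2_norm_power2 L2_inner_def
    by (simp add: L2_def nn_integral_eq_integral power2_eq_square)
  have "(\<integral>\<^sup>+x. (\<Sum>k. ennreal ((w k x)\<^sup>2)) \<partial>lebesgue_on \<Omega>)
      = (\<Sum>k. \<integral>\<^sup>+x. ennreal ((w k x)\<^sup>2) \<partial>lebesgue_on \<Omega>)"
    by (rule nn_integral_suminf[OF meas])
  also have "\<dots> = (\<Sum>k. ennreal ((L2_norm \<Omega> (w k))\<^sup>2))"
    by (simp only: norms)
  also have "\<dots> \<noteq> \<infinity>"
    unfolding infinity_ennreal_def by (rule ennreal_suminf_neq_top[OF summable]) simp
  finally have "AE x in lebesgue_on \<Omega>. (\<Sum>k. ennreal ((w k x)\<^sup>2)) \<noteq> \<infinity>"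
    by (intro nn_integral_PInf_AE borel_measurable_suminf_order meas)
  then show ?thesis
  proof (rule AE_mp, intro AE_I2 impI)
    fix x assume "(\<Sum>k. ennreal ((w k x)\<^sup>2)) \<noteq> \<infinity>"
    then have "summable (\<lambda>k. (w k x)\<^sup>2)"
      by (intro summable_suminf_not_top) (simp_all add: top_ennreal.rep_eq)
    then have "(\<lambda>k. (w k x)\<^sup>2) \<longlonglongrightarrow> 0"
      by (rule summable_LIMSEQ_zero)
    then show "(\<lambda>k. w k x) \<longlonglongrightarrow> 0"
      using tendsto_real_sqrt[of "\<lambda>k. (w k x)\<^sup>2" 0 sequentially]
      by (simp add: tendsto_rabs_zero_iff)
  qed
qed

text \<open>Testing the weak convergence against the indicator of
  \<open>{x. \<forall>n\<ge>N. v n x \<ge> w x + e}\<close> shows that this set is null.\<close>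
lemma weak_conv_L2_ae_exists_less:
  fixes v :: "nat \<Rightarrow> 'a::euclidean_space \<Rightarrow> real"
  assumes \<Omega>: "\<Omega> \<in> sets lebesgue" "emeasure lebesgue \<Omega> < \<infinity>"
    and conv: "weak_conv_L2 \<Omega> v w" and "e > 0"
  shows "AE x in lebesgue_on \<Omega>. \<exists>n\<ge>N. v n x < w x + e"
proof -
  interpret finite_measure "lebesgue_on \<Omega>"
    using \<Omega> by (intro finite_measure_lebesgue_on fmeasurableI)
  have v: "\<And>n. v n \<in> L2 \<Omega>" and w: "w \<in> L2 \<Omega>"
    and lim: "\<And>h. h \<in> L2 \<Omega> \<Longrightarrow> (\<lambda>k. L2_inner \<Omega> (v k) h) \<longlonglongrightarrow> L2_inner \<Omega> w h"
    using conv unfolding weak_conv_L2_def by auto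
  have [measurable]: "v n \<in> borel_measurable (lebesgue_on \<Omega>)" "w \<in> borel_measurable (lebesgue_on \<Omega>)" for n
    using v w by (simp_all add: L2_def)
  define A where "A = {x \<in> space (lebesgue_on \<Omega>). \<forall>n\<ge>N. w x + e \<le> v n x}"
  have A[measurable]: "A \<in> sets (lebesgue_on \<Omega>)"
    unfolding A_def by measurable
  define h where "h = (indicator A :: 'a \<Rightarrow> real)"
  have h: "h \<in> L2 \<Omega>"
    unfolding h_def by (rule L2_indicator[OF \<Omega> A])
  have int_h: "integrable (lebesgue_on \<Omega>) h"
    unfolding h_def by (intro integrable_real_indicator) (auto simp: less_top[symmetric])
  have "L2_inner \<Omega> w h + e * measure (lebesgue_on \<Omega>) A \<le> L2_inner \<Omega> (v n) h" if "N \<le> n" for n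
  proof -
    have "A \<inter> \<Omega> = A"
      using sets.sets_into_space[OF A] by auto
    then have "L2_inner \<Omega> w h + e * measure (lebesgue_on \<Omega>) A = (\<integral>x. w x * h x + e * h x \<partial>lebesgue_on \<Omega>)"
      using L2_mult_integrable[OF w h] int_h A by (simp add: L2_inner_def h_def)
    also have "\<dots> \<le> L2_inner \<Omega> (v n) h"
      unfolding L2_inner_def
    proof (rule integral_mono)
      show "integrable (lebesgue_on \<Omega>) (\<lambda>x. w x * h x + e * h x)"
        using L2_mult_integrable[OF w h] int_h by simp
      show "integrable (lebesgue_on \<Omega>) (\<lambda>x. v n x * h x)"
        by (rule L2_mult_integrable[OF v h])
      show "w x * h x + e * h x \<le> v n x * h x" for x
        using that by (simp add: h_def A_def indicator_def algebra_simps)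
    qed
    finally show ?thesis .
  qed
  then have "L2_inner \<Omega> w h + e * measure (lebesgue_on \<Omega>) A \<le> L2_inner \<Omega> w h"
    by (intro LIMSEQ_le_const[OF lim[OF h]]) blast
  then have "measure (lebesgue_on \<Omega>) A = 0"
    using \<open>e > 0\<close> by (simp add: mult_le_0_iff measure_nonneg order.antisym)
  then have "A \<in> null_sets (lebesgue_on \<Omega>)"
    using A by (simp add: emeasure_eq_measure null_setsI)
  then show ?thesis
    by (rule AE_I') (auto simp: A_def not_less)
qed

lemma weak_conv_L2_uminus:
  assumes "weak_conv_L2 \<Omega> v w"
  shows "weak_conv_L2 \<Omega> (\<lambda>n x. - v n x) (\<lambda>x. - w x)"
proof -
  have uminus_L2: "(\<lambda>x. - u x) \<in> L2 \<Omega>" if "u \<in> L2 \<Omega>" for u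
    using L2_lin_comb[OF that that, of "-1" 0] by simp
  have "L2_inner \<Omega> (\<lambda>x. - u x) h = - L2_inner \<Omega> u h" for u h
    using L2_inner_scale_right[of \<Omega> h "-1" u] by (simp add: L2_inner_commute)
  then show ?thesis
    using assms uminus_L2 unfolding weak_conv_L2_def by (simp add: tendsto_minus)
qed

lemma weak_conv_L2_ae_in_oscillation_range:
  fixes v :: "nat \<Rightarrow> 'a::euclidean_space \<Rightarrow> real"
  assumes \<Omega>: "\<Omega> \<in> sets lebesgue" "emeasure lebesgue \<Omega> < \<infinity>"
    and conv: "weak_conv_L2 \<Omega> v w"
  shows "AE x in lebesgue_on \<Omega>. in_oscillation_range (\<lambda>n. v n x) (w x)"
proof -
  have "AE x in lebesgue_on \<Omega>. \<forall>j::nat. \<forall>N::nat.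
      (\<exists>n\<ge>N. v n x < w x + 1 / Suc j) \<and> (\<exists>n\<ge>N. - v n x < - w x + 1 / Suc j)"
    using weak_conv_L2_ae_exists_less[OF \<Omega> conv]
      weak_conv_L2_ae_exists_less[OF \<Omega> weak_conv_L2_uminus[OF conv]]
    by (simp add: AE_all_countable AE_conj_iff)
  then show ?thesis
  proof (rule AE_mp, intro AE_I2 impI)
    fix x
    assume *: "\<forall>j::nat. \<forall>N::nat.
      (\<exists>n\<ge>N. v n x < w x + 1 / Suc j) \<and> (\<exists>n\<ge>N. - v n x < - w x + 1 / Suc j)"
    show "in_oscillation_range (\<lambda>n. v n x) (w x)"
      unfolding in_oscillation_range_def frequently_sequentially
    proof (intro allI impI conjI)
      fix e :: real and N :: nat assume "e > 0"
      then obtain j :: nat where "1 / Suc j < e"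
        by (metis nat_approx_posE)
      moreover obtain n1 n2 where "N \<le> n1" "v n1 x < w x + 1 / Suc j"
        and "N \<le> n2" "- v n2 x < - w x + 1 / Suc j"
        using spec[OF spec[OF *, of j], of N] by blast
      ultimately show "\<exists>n\<ge>N. v n x < w x + e" "\<exists>n\<ge>N. w x - e < v n x"
        by (intro exI[of _ n1] exI[of _ n2] conjI; linarith)+
    qed
  qed
qed

section \<open>Proximal gradient iterates\<close>

lemma AE_le_if_integral_le_min:
  fixes F H :: "'a \<Rightarrow> real"
  assumes F: "integrable M F" and min: "integrable M (\<lambda>x. min (F x) (H x))"
    and le: "(\<integral>x. F x \<partial>M) \<le> (\<integral>x. min (F x) (H x) \<partial>M)"
  shows "AE x in M. F x \<le> H x"
proof -
  have D: "integrable M (\<lambda>x. F x - min (F x) (H x))"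
    using F min by (rule Bochner_Integration.integrable_diff)
  have "0 \<le> (\<integral>x. F x - min (F x) (H x) \<partial>M)"
    by (rule integral_nonneg_AE) simp
  moreover have "(\<integral>x. F x - min (F x) (H x) \<partial>M) = (\<integral>x. F x \<partial>M) - (\<integral>x. min (F x) (H x) \<partial>M)"
    using F min by (rule Bochner_Integration.integral_diff)
  ultimately have "(\<integral>x. F x - min (F x) (H x) \<partial>M) = 0"
    using le by linarith
  then have "AE x in M. F x - min (F x) (H x) = 0"
    using integral_nonneg_eq_0_iff_AE[OF D] by simp
  then show ?thesis
    by eventually_elim simp
qed

lemma L2_patch:
  assumes "\<Omega> \<in> sets lebesgue" "emeasure lebesgue \<Omega> < \<infinity>"
    and y: "y \<in> L2 \<Omega>" and A: "A \<in> sets (lebesgue_on \<Omega>)"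
  shows "(\<lambda>x. if x \<in> A then w else y x) \<in> L2 \<Omega>"
proof -
  interpret finite_measure "lebesgue_on \<Omega>"
    using assms(1,2) by (intro finite_measure_lebesgue_on fmeasurableI)
  have [measurable]: "y \<in> borel_measurable (lebesgue_on \<Omega>)"
    using y by (simp add: L2_def)
  have "integrable (lebesgue_on \<Omega>) (\<lambda>x. (if x \<in> A then w else y x)\<^sup>2)"
  proof (rule Bochner_Integration.integrable_bound)
    show "integrable (lebesgue_on \<Omega>) (\<lambda>x. w\<^sup>2 + (y x)\<^sup>2)"
      using y by (simp add: L2_def)
    show "(\<lambda>x. (if x \<in> A then w else y x)\<^sup>2) \<in> borel_measurable (lebesgue_on \<Omega>)"
      using A by measurable
  qed simp
  then show ?thesis
    using A by (simp add: L2_def)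
qed

lemma G_int_nonneg: "0 \<le> G_int \<Omega> g u"
  by (simp add: G_int_def)

lemma prox_model_self: "prox_model \<Omega> f gradf g L u u = ereal (f u) + G_int \<Omega> g u"
  by (simp add: prox_model_def L2_inner_def L2_norm_def)

context L2_smooth
begin

lemma prox_model_split:
  assumes b: "b \<in> L2 \<Omega>" and u: "u \<in> L2 \<Omega>"
  shows "prox_model \<Omega> f gradf g L b u =
    ereal (f b + (\<integral>x. L / 2 * (b x)\<^sup>2 - gradf b x * b x \<partial>lebesgue_on \<Omega>)
               + (\<integral>x. L / 2 * (u x)\<^sup>2 - (L * b x - gradf b x) * u x \<partial>lebesgue_on \<Omega>)) + G_int \<Omega> g u"
proof -
  define a where "a = gradf b"
  have a: "a \<in> L2 \<Omega>"
    unfolding a_def by (rule gradf_L2[OF b])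
  have d: "(\<lambda>x. u x - b x) \<in> L2 \<Omega>"
    by (rule L2_diff[OF u b])
  have int_const: "integrable (lebesgue_on \<Omega>) (\<lambda>x. L / 2 * (b x)\<^sup>2 - a x * b x)"
    using b L2_mult_integrable[OF a b] by (simp add: L2_def)
  have int_obj: "integrable (lebesgue_on \<Omega>) (\<lambda>x. L / 2 * (u x)\<^sup>2 - (L * b x - a x) * u x)"
    using u L2_mult_integrable[OF L2_lin_comb[OF b a, of L "-1"] u] by (simp add: L2_def)
  have "L2_inner \<Omega> a (\<lambda>x. u x - b x) + L / 2 * (L2_norm \<Omega> (\<lambda>x. u x - b x))\<^sup>2
      = (\<integral>x. a x * (u x - b x) + L / 2 * ((u x - b x) * (u x - b x)) \<partial>lebesgue_on \<Omega>)"
    using L2_mult_integrable[OF a d] L2_mult_integrable[OF d d]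
    by (simp add: L2_norm_power2 L2_inner_def)
  also have "\<dots> = (\<integral>x. (L / 2 * (b x)\<^sup>2 - a x * b x)
                      + (L / 2 * (u x)\<^sup>2 - (L * b x - a x) * u x) \<partial>lebesgue_on \<Omega>)"
    by (rule Bochner_Integration.integral_cong) (simp_all add: algebra_simps power2_eq_square)
  also have "\<dots> = (\<integral>x. L / 2 * (b x)\<^sup>2 - a x * b x \<partial>lebesgue_on \<Omega>)
                 + (\<integral>x. L / 2 * (u x)\<^sup>2 - (L * b x - a x) * u x \<partial>lebesgue_on \<Omega>)"
    by (rule Bochner_Integration.integral_add[OF int_const int_obj])
  finally show ?thesis
    unfolding prox_model_def a_def by (simp add: add.assoc)
qed

end

context prox_penalty
begin

lemma G_int_zero: "G_int \<Omega> g (\<lambda>x. 0) = 0"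
  using enn2ereal_ennreal[of 0] by (simp add: G_int_def g_zero e2ennreal_neg)

lemma G_int_real:
  assumes [measurable]: "u \<in> borel_measurable (lebesgue_on \<Omega>)" and fin: "G_int \<Omega> g u < \<infinity>"
  shows "AE x in lebesgue_on \<Omega>. g (u x) = ereal (real_of_ereal (g (u x)))"
    and "integrable (lebesgue_on \<Omega>) (\<lambda>x. real_of_ereal (g (u x)))"
    and "G_int \<Omega> g u = ereal (\<integral>x. real_of_ereal (g (u x)) \<partial>lebesgue_on \<Omega>)"
proof -
  have fin': "(\<integral>\<^sup>+ x. e2ennreal (g (u x)) \<partial>lebesgue_on \<Omega>) \<noteq> \<infinity>"
    using fin by (simp add: G_int_def)
  have "AE x in lebesgue_on \<Omega>. e2ennreal (g (u x)) \<noteq> \<infinity>"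
    by (rule nn_integral_PInf_AE[OF _ fin']) measurable
  then show ae: "AE x in lebesgue_on \<Omega>. g (u x) = ereal (real_of_ereal (g (u x)))"
    by eventually_elim (metis e2ennreal_infty g_finite_iff infinity_ennreal_def)
  have eq: "(\<integral>\<^sup>+ x. e2ennreal (g (u x)) \<partial>lebesgue_on \<Omega>)
      = (\<integral>\<^sup>+ x. ennreal (real_of_ereal (g (u x))) \<partial>lebesgue_on \<Omega>)"
    by (rule nn_integral_cong_AE) (use ae in \<open>eventually_elim, metis e2ennreal_ereal\<close>)
  have nonneg: "AE x in lebesgue_on \<Omega>. 0 \<le> real_of_ereal (g (u x))"
    by (intro AE_I2 real_of_ereal_pos g_nonneg)
  show int: "integrable (lebesgue_on \<Omega>) (\<lambda>x. real_of_ereal (g (u x)))"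
    by (rule integrableI_nonneg[OF _ nonneg]) (use fin' eq in \<open>auto simp: less_top\<close>)
  show "G_int \<Omega> g u = ereal (\<integral>x. real_of_ereal (g (u x)) \<partial>lebesgue_on \<Omega>)"
    unfolding G_int_def eq nn_integral_eq_integral[OF int nonneg]
    using integral_nonneg_AE[OF nonneg] by simp
qed

lemma G_int_patch_finite:
  assumes "\<Omega> \<in> sets lebesgue" "emeasure lebesgue \<Omega> < \<infinity>"
    and [measurable]: "y \<in> borel_measurable (lebesgue_on \<Omega>)" "A \<in> sets (lebesgue_on \<Omega>)"
    and fin: "G_int \<Omega> g y < \<infinity>" and "g w = ereal G"
  shows "G_int \<Omega> g (\<lambda>x. if x \<in> A then w else y x) < \<infinity>"
proof -
  interpret finite_measure "lebesgue_on \<Omega>"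
    using assms(1,2) by (intro finite_measure_lebesgue_on fmeasurableI)
  have "(\<integral>\<^sup>+ x. e2ennreal (g (if x \<in> A then w else y x)) \<partial>lebesgue_on \<Omega>)
      \<le> (\<integral>\<^sup>+ x. e2ennreal (g (y x)) + ennreal G \<partial>lebesgue_on \<Omega>)"
    by (intro nn_integral_mono) (auto simp: \<open>g w = ereal G\<close>)
  also have "\<dots> = (\<integral>\<^sup>+ x. e2ennreal (g (y x)) \<partial>lebesgue_on \<Omega>) + ennreal G * emeasure (lebesgue_on \<Omega>) (space (lebesgue_on \<Omega>))"
    by (subst nn_integral_add) simp_all
  also have "\<dots> < \<infinity>"
    using fin assms(1,2) by (simp add: G_int_def less_top[symmetric] ennreal_mult_less_top ennreal_mult_eq_top_iff emeasure_restrict_space)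
  finally show ?thesis
    by (simp add: G_int_def)
qed

lemma near_infimum_point:
  assumes "r > 0" "e > 0"
  obtains w' where "\<bar>w' - c\<bar> < r" "\<And>w. \<bar>w - c\<bar> < r \<Longrightarrow> g w' \<le> g w + ereal e"
proof (cases "\<forall>w. \<bar>w - c\<bar> < r \<longrightarrow> g w = \<infinity>")
  case True
  then show ?thesis
    using that[of c] \<open>r > 0\<close> by simp
next
  case False
  define I where "I = {w. \<bar>w - c\<bar> < r}"
  define m where "m = Inf (g ` I)"
  obtain w0 where "w0 \<in> I" "g w0 \<noteq> \<infinity>"
    using False by (auto simp: I_def)
  moreover have "0 \<le> m"
    unfolding m_def by (rule Inf_greatest) (auto simp: g_nonneg)
  ultimately have "m \<noteq> \<infinity>" "m \<noteq> - \<infinity>"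
    using INF_lower[of w0 I g] by (auto simp: m_def)
  then have "m < m + ereal e"
    using \<open>e > 0\<close> by (cases m) auto
  then obtain w' where "w' \<in> I" "g w' < m + ereal e"
    unfolding m_def Inf_less_iff by auto
  moreover have "m + ereal e \<le> g w + ereal e" if "\<bar>w - c\<bar> < r" for w
    using that by (intro add_right_mono) (simp add: m_def I_def INF_lower)
  ultimately show ?thesis
    using that[of w'] by (force simp: I_def)
qed

lemma scalar_prox_objective_le_if_approx:
  assumes ws: "ws \<longlonglongrightarrow> v" and g_v: "g v = ereal G"
    and le: "\<And>n. scalar_prox_objective g L p y \<le> ereal (L / 2 * (ws n)\<^sup>2 - p * ws n + G + 1 / Suc n)"
  shows "scalar_prox_objective g L p y \<le> scalar_prox_objective g L p v"
proof -
  have "(\<lambda>n. L / 2 * (ws n)\<^sup>2 - p * ws n + G + inverse (real (Suc n))) \<longlonglongrightarrow> L / 2 * v\<^sup>2 - p * v + G + 0"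
    by (intro tendsto_intros ws LIMSEQ_inverse_real_of_nat)
  then have "(\<lambda>n. ereal (L / 2 * (ws n)\<^sup>2 - p * ws n + G + 1 / Suc n)) \<longlonglongrightarrow> ereal (L / 2 * v\<^sup>2 - p * v + G)"
    unfolding lim_ereal by (simp add: inverse_eq_divide)
  then have "scalar_prox_objective g L p y \<le> ereal (L / 2 * v\<^sup>2 - p * v + G)"
    by (rule LIMSEQ_le_const) (use le in blast)
  then show ?thesis
    by (simp add: scalar_prox_objective_def g_v)
qed

text \<open>Minimality of the scalar objective only has to be checked on a countable set: near
  every rational \<open>q\<close>, a point almost minimising \<open>g\<close> on \<open>(q - 1/(n+1), q + 1/(n+1))\<close>.\<close>
lemma scalar_prox_argmin_countable_test:
  obtains D where "countable D"
    "\<And>p y. (\<And>w. w \<in> D \<Longrightarrow> scalar_prox_objective g L p y \<le> scalar_prox_objective g L p w)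
       \<Longrightarrow> scalar_prox_argmin g L p y"
proof -
  have "\<forall>(c::real) (n::nat). \<exists>w'. \<bar>w' - c\<bar> < 1 / Suc n \<and>
      (\<forall>w. \<bar>w - c\<bar> < 1 / Suc n \<longrightarrow> g w' \<le> g w + ereal (1 / Suc n))"
    by (metis near_infimum_point of_nat_0_less_iff zero_less_Suc zero_less_divide_1_iff)
  then obtain W where W_close: "\<And>c n. \<bar>W c n - c\<bar> < 1 / Suc n"
    and W_min: "\<And>c n w. \<bar>w - c\<bar> < 1 / Suc n \<Longrightarrow> g (W c n) \<le> g w + ereal (1 / Suc n)"
    by metis
  define D where "D = (\<lambda>(q, n). W (of_rat q) n) ` (UNIV :: (rat \<times> nat) set)"
  have "scalar_prox_argmin g L p y"
    if test: "\<And>w. w \<in> D \<Longrightarrow> scalar_prox_objective g L p y \<le> scalar_prox_objective g L p w" for p y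
    unfolding scalar_prox_argmin_def
  proof
    fix v
    show "scalar_prox_objective g L p y \<le> scalar_prox_objective g L p v"
    proof (cases "g v")
      case (real G)
      have "\<exists>w'. \<bar>w' - v\<bar> < 2 / Suc n \<and>
          scalar_prox_objective g L p y \<le> ereal (L / 2 * w'\<^sup>2 - p * w' + G + 1 / Suc n)" for n
      proof -
        obtain q where "v - 1 / Suc n < of_rat q" "of_rat q < v + 1 / Suc n"
          using of_rat_dense[of "v - 1 / Suc n" "v + 1 / Suc n"] by auto
        then have q: "\<bar>v - of_rat q\<bar> < 1 / Suc n"
          by (simp add: abs_less_iff)
        have "W (of_rat q) n \<in> D"
          unfolding D_def by (auto intro!: image_eqI[of _ _ "(q, n)"])
        then have "scalar_prox_objective g L p y \<le> scalar_prox_objective g L p (W (of_rat q) n)"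
          by (rule test)
        also have "\<dots> \<le> ereal (L / 2 * (W (of_rat q) n)\<^sup>2 - p * W (of_rat q) n) + (ereal G + ereal (1 / Suc n))"
          using W_min[OF q] real unfolding scalar_prox_objective_def by (intro add_left_mono) simp
        also have "\<dots> = ereal (L / 2 * (W (of_rat q) n)\<^sup>2 - p * W (of_rat q) n + G + 1 / Suc n)"
          by simp
        finally show ?thesis
          using W_close[of "of_rat q" n] q by (intro exI[of _ "W (of_rat q) n"]) auto
      qed
      then obtain ws where "\<And>n. \<bar>ws n - v\<bar> < 2 / Suc n"
        and "\<And>n. scalar_prox_objective g L p y \<le> ereal (L / 2 * (ws n)\<^sup>2 - p * ws n + G + 1 / Suc n)"
        by metis
      then show ?thesis
        by (intro scalar_prox_objective_le_if_approx[OF LIMSEQ_of_abs_diff_less_divide_Suc real]) auto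
    qed (use g_nonneg[of v] in \<open>simp_all add: scalar_prox_objective_def\<close>)
  qed
  moreover have "countable D"
    by (simp add: D_def)
  ultimately show ?thesis
    using that by blast
qed

end

locale prox_grad_setting = L2_smooth \<Omega> f gradf Lf + prox_penalty g L
  for \<Omega> :: "'a::euclidean_space set" and f gradf Lf g L +
  fixes uu :: "nat \<Rightarrow> 'a \<Rightarrow> real"
  assumes \<Omega>_lebesgue: "\<Omega> \<in> sets lebesgue" and \<Omega>_finite: "emeasure lebesgue \<Omega> < \<infinity>"
    and Lf_less_L: "Lf < L"
    and iterates: "prox_grad_iterates \<Omega> f gradf g L uu"
begin

lemma uu_L2: "uu k \<in> L2 \<Omega>"
  using iterates by (simp add: prox_grad_iterates_def)

lemma uu_minimal:
  "v \<in> L2 \<Omega> \<Longrightarrow> prox_model \<Omega> f gradf g L (uu k) (uu (Suc k)) \<le> prox_model \<Omega> f gradf g L (uu k) v"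
  using iterates by (simp add: prox_grad_iterates_def)

lemma uu_borel [measurable]: "uu k \<in> borel_measurable (lebesgue_on \<Omega>)"
  using uu_L2 by (simp add: L2_def)

lemma gradf_uu_borel [measurable]: "gradf (uu k) \<in> borel_measurable (lebesgue_on \<Omega>)"
  using gradf_L2[OF uu_L2] by (simp add: L2_def)

lemma G_int_iterate_finite: "G_int \<Omega> g (uu (Suc k)) < \<infinity>"
proof -
  have "prox_model \<Omega> f gradf g L (uu k) (uu (Suc k)) \<le> prox_model \<Omega> f gradf g L (uu k) (\<lambda>x. 0)"
    by (rule uu_minimal) (simp add: L2_def)
  then show ?thesis
    by (auto simp: prox_model_def G_int_zero)
qed

lemma sufficient_decrease:
  "ereal (f (uu (Suc k)) + (L - Lf) / 2 * (L2_norm \<Omega> (\<lambda>x. uu (Suc k) x - uu k x))\<^sup>2)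
      + G_int \<Omega> g (uu (Suc k))
     \<le> ereal (f (uu k)) + G_int \<Omega> g (uu k)"
proof -
  have "f (uu (Suc k)) + (L - Lf) / 2 * (L2_norm \<Omega> (\<lambda>x. uu (Suc k) x - uu k x))\<^sup>2
      \<le> f (uu k) + L2_inner \<Omega> (gradf (uu k)) (\<lambda>x. uu (Suc k) x - uu k x)
          + L / 2 * (L2_norm \<Omega> (\<lambda>x. uu (Suc k) x - uu k x))\<^sup>2"
    using descent_lemma[OF uu_L2[of k] uu_L2[of "Suc k"]] by (simp add: algebra_simps diff_divide_distrib)
  then have "ereal (f (uu (Suc k)) + (L - Lf) / 2 * (L2_norm \<Omega> (\<lambda>x. uu (Suc k) x - uu k x))\<^sup>2)
      + G_int \<Omega> g (uu (Suc k)) \<le> prox_model \<Omega> f gradf g L (uu k) (uu (Suc k))"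
    unfolding prox_model_def by (intro add_right_mono) simp
  also have "\<dots> \<le> prox_model \<Omega> f gradf g L (uu k) (uu k)"
    by (rule uu_minimal[OF uu_L2])
  finally show ?thesis
    by (simp add: prox_model_self)
qed

lemma step_norms_summable: "summable (\<lambda>k. (L2_norm \<Omega> (\<lambda>x. uu (Suc (Suc k)) x - uu (Suc k) x))\<^sup>2)"
proof -
  define N where "N k = (L2_norm \<Omega> (\<lambda>x. uu (Suc (Suc k)) x - uu (Suc k) x))\<^sup>2" for k
  define Gr where "Gr k = real_of_ereal (G_int \<Omega> g (uu (Suc k)))" for k
  define E where "E k = f (uu (Suc k)) + Gr k" for k
  have G_real: "G_int \<Omega> g (uu (Suc k)) = ereal (Gr k)" for k
    using G_int_iterate_finite[of k] G_int_nonneg[of \<Omega> g "uu (Suc k)"] unfolding Gr_def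
    by (cases "G_int \<Omega> g (uu (Suc k))") auto
  have decrease: "E (Suc k) + (L - Lf) / 2 * N k \<le> E k" for k
    using sufficient_decrease[of "Suc k"] by (simp add: G_real E_def N_def)
  obtain c where c: "\<And>u. u \<in> L2 \<Omega> \<Longrightarrow> c \<le> f u"
    using f_bounded_below by blast
  have E_lower: "c \<le> E k" for k
    using c[OF uu_L2] G_int_nonneg[of \<Omega> g "uu (Suc k)"] unfolding E_def G_real
    by (simp add: add_increasing2)
  have telescope: "E n + (L - Lf) / 2 * (\<Sum>i<n. N i) \<le> E 0" for n
  proof (induction n)
    case (Suc n)
    have "E (Suc n) + (L - Lf) / 2 * (\<Sum>i<Suc n. N i)
        = (E (Suc n) + (L - Lf) / 2 * N n) + (L - Lf) / 2 * (\<Sum>i<n. N i)"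
      by (simp add: distrib_left)
    also have "\<dots> \<le> E n + (L - Lf) / 2 * (\<Sum>i<n. N i)"
      using decrease[of n] by simp
    finally show ?case
      using Suc.IH by simp
  qed simp
  show ?thesis
    unfolding N_def[symmetric]
  proof (rule summableI_nonneg_bounded)
    show "(\<Sum>i<n. N i) \<le> (E 0 - c) / ((L - Lf) / 2)" for n
      using telescope[of n] E_lower[of n] Lf_less_L by (simp add: field_simps)
  qed (simp add: N_def)
qed

lemma ae_steps_tendsto_zero: "AE x in lebesgue_on \<Omega>. (\<lambda>k. uu (Suc k) x - uu k x) \<longlonglongrightarrow> 0"
  using ae_tendsto_zero_if_summable_L2_norms[OF L2_diff[OF uu_L2 uu_L2] step_norms_summable]
  by eventually_elim (rule LIMSEQ_imp_Suc)

end

context prox_grad_setting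
begin

definition model_integrand :: "nat \<Rightarrow> 'a \<Rightarrow> real \<Rightarrow> real" where
  "model_integrand k x z = L / 2 * z\<^sup>2 - (L * uu k x - gradf (uu k) x) * z"

lemma model_integrand_integrable:
  assumes "u \<in> L2 \<Omega>"
  shows "integrable (lebesgue_on \<Omega>) (\<lambda>x. model_integrand k x (u x))"
  using assms L2_mult_integrable[OF L2_lin_comb[OF uu_L2[of k] gradf_L2[OF uu_L2[of k]], of L "-1"] assms]
  by (simp add: L2_def model_integrand_def)

lemma integral_model_le:
  assumes v: "v \<in> L2 \<Omega>" and G_v: "G_int \<Omega> g v < \<infinity>"
  shows "(\<integral>x. model_integrand k x (uu (Suc k) x) + real_of_ereal (g (uu (Suc k) x)) \<partial>lebesgue_on \<Omega>)
    \<le> (\<integral>x. model_integrand k x (v x) + real_of_ereal (g (v x)) \<partial>lebesgue_on \<Omega>)"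
proof -
  have v_meas: "v \<in> borel_measurable (lebesgue_on \<Omega>)"
    using v by (simp add: L2_def)
  have "prox_model \<Omega> f gradf g L (uu k) (uu (Suc k)) \<le> prox_model \<Omega> f gradf g L (uu k) v"
    by (rule uu_minimal[OF v])
  then show ?thesis
    unfolding prox_model_split[OF uu_L2 uu_L2] prox_model_split[OF uu_L2 v]
      G_int_real(3)[OF uu_borel G_int_iterate_finite] G_int_real(3)[OF v_meas G_v]
    using model_integrand_integrable[OF uu_L2, of k "Suc k"] model_integrand_integrable[OF v, of k]
      G_int_real(2)[OF uu_borel G_int_iterate_finite] G_int_real(2)[OF v_meas G_v]
    by (simp add: model_integrand_def)
qed

text \<open>If \<open>u\<^sub>k\<^sub>+\<^sub>1(x)\<close> did worse than the constant \<open>w\<close> on a set \<open>A\<close> of positive measure,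
  replacing \<open>u\<^sub>k\<^sub>+\<^sub>1\<close> by \<open>w\<close> on \<open>A\<close> would decrease the proximal model.\<close>
lemma ae_scalar_prox_objective_le:
  "AE x in lebesgue_on \<Omega>.
     scalar_prox_objective g L (L * uu k x - gradf (uu k) x) (uu (Suc k) x)
       \<le> scalar_prox_objective g L (L * uu k x - gradf (uu k) x) w"
proof (cases "g w")
  case (real G)
  define y where "y = uu (Suc k)"
  define Q where "Q = model_integrand k"
  define \<Gamma> where "\<Gamma> x = real_of_ereal (g (y x))" for x
  define F where "F = (\<lambda>x. Q x (y x) + \<Gamma> x)"
  define H where "H = (\<lambda>x. Q x w + G)"
  define A where "A = {x \<in> space (lebesgue_on \<Omega>). H x < F x}"
  define v where "v x = (if x \<in> A then w else y x)" for x
  have y_L2: "y \<in> L2 \<Omega>" and y_meas [measurable]: "y \<in> borel_measurable (lebesgue_on \<Omega>)"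
    by (simp_all add: y_def uu_L2)
  have G_y: "G_int \<Omega> g y < \<infinity>"
    unfolding y_def by (rule G_int_iterate_finite)
  have A_meas [measurable]: "A \<in> sets (lebesgue_on \<Omega>)"
    unfolding A_def F_def H_def Q_def \<Gamma>_def model_integrand_def by measurable
  have v_L2: "v \<in> L2 \<Omega>"
    unfolding v_def by (rule L2_patch[OF \<Omega>_lebesgue \<Omega>_finite y_L2 A_meas])
  have G_v: "G_int \<Omega> g v < \<infinity>"
    unfolding v_def by (rule G_int_patch_finite[OF \<Omega>_lebesgue \<Omega>_finite y_meas A_meas G_y real])
  have min_eq: "Q x (v x) + real_of_ereal (g (v x)) = min (F x) (H x)"
    if "x \<in> space (lebesgue_on \<Omega>)" for x
    using that by (simp add: v_def F_def H_def A_def \<Gamma>_def real)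
  have int_F: "integrable (lebesgue_on \<Omega>) F"
    using model_integrand_integrable[OF y_L2] G_int_real(2)[OF y_meas G_y]
    by (simp add: F_def Q_def \<Gamma>_def)
  have "integrable (lebesgue_on \<Omega>) (\<lambda>x. Q x (v x) + real_of_ereal (g (v x)))"
    using model_integrand_integrable[OF v_L2] G_int_real(2)[OF _ G_v] v_L2
    by (simp add: Q_def L2_def)
  then have int_min: "integrable (lebesgue_on \<Omega>) (\<lambda>x. min (F x) (H x))"
    by (rule Bochner_Integration.integrable_cong[THEN iffD1, OF refl, rotated]) (rule min_eq)
  have "(\<integral>x. F x \<partial>lebesgue_on \<Omega>)
      \<le> (\<integral>x. Q x (v x) + real_of_ereal (g (v x)) \<partial>lebesgue_on \<Omega>)"
    using integral_model_le[OF v_L2 G_v, of k] by (simp add: F_def Q_def \<Gamma>_def y_def)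
  also have "\<dots> = (\<integral>x. min (F x) (H x) \<partial>lebesgue_on \<Omega>)"
    by (rule Bochner_Integration.integral_cong[OF refl min_eq])
  finally have "AE x in lebesgue_on \<Omega>. F x \<le> H x"
    by (rule AE_le_if_integral_le_min[OF int_F int_min])
  with G_int_real(1)[OF y_meas G_y] show ?thesis
  proof eventually_elim
    case (elim x)
    then have "g (y x) = ereal (\<Gamma> x)" and "\<Gamma> x + Q x (y x) \<le> Q x w + G"
      by (simp_all add: \<Gamma>_def F_def H_def)
    then show ?case
      by (simp add: scalar_prox_objective_def Q_def model_integrand_def y_def real)
  qed
qed (use g_nonneg[of w] in \<open>simp_all add: scalar_prox_objective_def\<close>)

lemma ae_scalar_prox_argmin:
  "AE x in lebesgue_on \<Omega>. \<forall>k. scalar_prox_argmin g L (L * uu k x - gradf (uu k) x) (uu (Suc k) x)"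
proof -
  obtain D where "countable D" and test: "\<And>p y. (\<And>w. w \<in> D \<Longrightarrow>
      scalar_prox_objective g L p y \<le> scalar_prox_objective g L p w) \<Longrightarrow> scalar_prox_argmin g L p y"
    using scalar_prox_argmin_countable_test by blast
  have "AE x in lebesgue_on \<Omega>. \<forall>k. \<forall>w\<in>D.
      scalar_prox_objective g L (L * uu k x - gradf (uu k) x) (uu (Suc k) x)
        \<le> scalar_prox_objective g L (L * uu k x - gradf (uu k) x) w"
    using \<open>countable D\<close> by (simp add: AE_all_countable AE_ball_countable ae_scalar_prox_objective_le)
  then show ?thesis
    by eventually_elim (blast intro: test)
qed

end

theorem theorem4p11:
  fixes \<Omega> :: "'a::euclidean_space set"
    and f :: "('a \<Rightarrow> real) \<Rightarrow> real" and gradf :: "('a \<Rightarrow> real) \<Rightarrow> 'a \<Rightarrow> real"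
    and Lf L :: real and g :: "real \<Rightarrow> ereal"
    and uu :: "nat \<Rightarrow> 'a \<Rightarrow> real" and r :: "nat \<Rightarrow> nat" and ustar :: "'a \<Rightarrow> real"
  assumes "\<Omega> \<in> sets lebesgue" and "emeasure lebesgue \<Omega> < \<infinity>"
    and "assumption_A \<Omega> f gradf Lf"
    and "assumption_B g"
    and "L > Lf" and "1 / L > s0 g"
    and "prox_grad_iterates \<Omega> f gradf g L uu"
    and "strict_mono r" and "weak_conv_L2 \<Omega> (\<lambda>n. uu (r n)) ustar"
    and "AE x in lebesgue_on \<Omega>. (\<lambda>n. gradf (uu (r n)) x) \<longlonglongrightarrow> gradf ustar x"
  shows "AE x in lebesgue_on \<Omega>.
           ustar x \<in> Gzero g L (- gradf ustar x) \<union> conv_inf (Gplus g L) (- gradf ustar x)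
                       \<union> conv_inf (Gminus g L) (- gradf ustar x)"
proof -
  interpret L2_smooth \<Omega> f gradf Lf
    by unfold_locales (rule assms(3))
  interpret prox_grad_setting \<Omega> f gradf Lf g L uu
    using assms Lf_nonneg by unfold_locales auto
  show ?thesis
    using ae_scalar_prox_argmin ae_steps_tendsto_zero assms(10)
      weak_conv_L2_ae_in_oscillation_range[OF assms(1,2,9)]
  proof eventually_elim
    case (elim x)
    then show ?case
      by (intro cluster_point_mem_G_sets[where u="\<lambda>k. uu k x" and d="\<lambda>k. gradf (uu k) x",
            OF assms(6) _ _ assms(8)]) simp_all
  qed
qed

end
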